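(* Let $R$ be a nonzero $m\times m$ rational matrix function with no poles on $\mathbb{T}$ given by $R(z)=zC(I_n-zA)^{-1}\Gamma+R_0+\Gamma^*(zI_n-A^* )^{-1}C^*$ with $A$ stable $n\times n$, and assume $R(\zeta)\ge0$ for each $\zeta\in\mathbb{T}$. Let $\Phi\in\mathfrak{R}H^\infty_{r\times m}$ be an outer spectral factor of $R$, let $\mathcal{X}_\Phi=\{x\in\mathbb{C}^n: W_{obs}x\in\operatorname{Im}T_\Phi^*\}$, and let $C_\Phi$ be an $r\times n$ matrix with $\Phi(z)=\Phi(0)+zC_\Phi(I_n-zA)^{-1}\Gamma$ and $W_{obs}x=T_\Phi^*W_{\Phi,obs}x$ for all $x\in\mathcal{X}_\Phi$. Set $A_\circ=P_{\mathcal{X}_\Phi}A|_{\mathcal{X}_\Phi}$ on $\mathcal{X}_\Phi$ and $C_\circ=C_\Phi|_{\mathcal{X}_\Phi}$, and let $W_{\circ,obs}$ be the observability operator of $\{C_\circ,A_\circ\}$. Then: (i) If the pair $\{C,A\}$ is observable, then $W_{\Phi,obs}|_{\mathcal{X}_\Phi}$ is one-to-one on $\mathcal{X}_\Phi$, $W_{\Phi,obs}|_{\mathcal{X}_\Phi}=W_{\circ,obs}$, and the pair $\{C_\circ,A_\circ\}$ is observable. (ii) If the pair $\{A,\Gamma\}$ is controllable, then $\mathcal{X}_\Phi=\mathbb{C}^n$. In particular, if $\{C,A\}$ is observable and $\{A,\Gamma\}$ is controllable, then the realization $\Phi(z)=\Phi(0)+zC_\Phi(I_n-zA)^{-1}\Gamma$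 is minimal.
   Context: $\mathbb{T}$ is the unit circle. A square matrix is stable if its eigenvalues lie in the open unit disc. $\mathfrak{R}H^\infty_{k\times l}$: $k\times l$ rational matrix functions without poles in the closed unit disc. $\Omega^*(z):=\Omega(1/\bar z)^*$. $\ell^2_+(\mathbb{C}^k)$: square summable $\mathbb{C}^k$-valued sequences indexed by $j\ge0$; $T_\Omega$ is the block Toeplitz operator with $(i,j)$ block $\Omega_{i-j}$ ($\Omega_j$ the Fourier coefficients). $W_{obs}=\operatorname{col}(CA^j)_{j\ge0}$, $W_{\Phi,obs}=\operatorname{col}(C_\Phi A^j)_{j\ge0}$. An outer spectral factor of $R$ is $\Phi\in\mathfrak{R}H^\infty_{r\times m}$ with $R(z)=\Phi(1/\bar z)^*\Phi(z)$ and $T_\Phi$ of dense range. A pair $\{C,A\}$ is observable if its observability operator is injective; $\{A,\Gamma\}$ is controllable if $\bigvee_{\nu\ge0}A^\nu\Gamma\mathbb{C}^m=\mathbb{C}^n$; a realization is minimal if it is observable and controllable. $P_{\mathcal{X}_\Phi}$ is the orthogonal projection onto $\mathcal{X}_\Phi$. (Such a $C_\Phi$ always exists.) *)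

theory Defs
  imports "Jordan_Normal_Form.Schur_Decomposition" "HOL-Analysis.Analysis"
begin

text \<open>Inverse of an n x n matrix (unspecified if the matrix is singular).\<close>
definition minv :: "nat \<Rightarrow> complex mat \<Rightarrow> complex mat" where
  "minv n M = (SOME B. B \<in> carrier_mat n n \<and> M * B = 1\<^sub>m n \<and> B * M = 1\<^sub>m n)"

definition stable_mat :: "nat \<Rightarrow> complex mat \<Rightarrow> bool" where
  "stable_mat n A \<longleftrightarrow> A \<in> carrier_mat n n \<and> (\<forall>k. eigenvalue A k \<longrightarrow> cmod k < 1)"

definition psd_mat :: "nat \<Rightarrow> complex mat \<Rightarrow> bool" where
  "psd_mat m M \<longleftrightarrow> M \<in> carrier_mat m m \<and> mat_adjoint M = M \<and>
     (\<forall>x \<in> carrier_vec m. 0 \<le> Re ((M *\<^sub>v x) \<bullet>c x))"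

definition vnorm2 :: "complex Matrix.vec \<Rightarrow> real" where
  "vnorm2 v = (\<Sum>i<dim_vec v. (cmod (vec_index v i))\<^sup>2)"

definition ell2 :: "nat \<Rightarrow> (nat \<Rightarrow> complex Matrix.vec) \<Rightarrow> bool" where
  "ell2 k x \<longleftrightarrow> (\<forall>j. x j \<in> carrier_vec k) \<and> summable (\<lambda>j. vnorm2 (x j))"

definition obs_op :: "('v \<Rightarrow> 'w) \<Rightarrow> ('v \<Rightarrow> 'v) \<Rightarrow> 'v \<Rightarrow> nat \<Rightarrow> 'w" where
  "obs_op c a x = (\<lambda>j. c ((a ^^ j) x))"

definition W_obs :: "complex mat \<Rightarrow> complex mat \<Rightarrow> complex Matrix.vec \<Rightarrow> nat \<Rightarrow> complex Matrix.vec" where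
  "W_obs C A = obs_op (\<lambda>v. C *\<^sub>v v) (\<lambda>v. A *\<^sub>v v)"

definition observable :: "nat \<Rightarrow> complex mat \<Rightarrow> complex mat \<Rightarrow> bool" where
  "observable n C A \<longleftrightarrow> inj_on (W_obs C A) (carrier_vec n)"

definition controllable :: "nat \<Rightarrow> nat \<Rightarrow> complex mat \<Rightarrow> complex mat \<Rightarrow> bool" where
  "controllable n m A \<Gamma> \<longleftrightarrow>
     (\<forall>x \<in> carrier_vec n. \<exists>N u. (\<forall>\<nu><N. u \<nu> \<in> carrier_vec m) \<and>
        x = finsum_vec TYPE(complex) n (\<lambda>\<nu>. (A ^\<^sub>m \<nu> * \<Gamma>) *\<^sub>v u \<nu>) {..<N})"

definition minimal_realization :: "nat \<Rightarrow> nat \<Rightarrow> complex mat \<Rightarrow> complex mat \<Rightarrow> complex mat \<Rightarrow> bool" where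
  "minimal_realization n m C A \<Gamma> \<longleftrightarrow> observable n C A \<and> controllable n m A \<Gamma>"

definition orth_proj :: "complex Matrix.vec set \<Rightarrow> complex Matrix.vec \<Rightarrow> complex Matrix.vec" where
  "orth_proj X x = (THE p. p \<in> X \<and> (\<forall>w \<in> X. (x - p) \<bullet>c w = 0))"

definition RH_inf :: "nat \<Rightarrow> nat \<Rightarrow> (complex \<Rightarrow> complex mat) \<Rightarrow> bool" where
  "RH_inf r m \<Phi> \<longleftrightarrow> (\<forall>z. \<Phi> z \<in> carrier_mat r m) \<and>
     (\<forall>i<r. \<forall>j<m. \<exists>p q :: complex poly.
        \<forall>z. cmod z \<le> 1 \<longrightarrow> poly q z \<noteq> 0 \<and> \<Phi> z $$ (i,j) = poly p z / poly q z)"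

definition fourier_coeff :: "nat \<Rightarrow> nat \<Rightarrow> (complex \<Rightarrow> complex mat) \<Rightarrow> int \<Rightarrow> complex mat" where
  "fourier_coeff r m \<Phi> k = Matrix.mat r m (\<lambda>(i,j).
     integral {0..2*pi} (\<lambda>t. \<Phi> (cis t) $$ (i,j) * cis (- (of_int k * t))) / (2 * pi))"

definition toeplitz :: "nat \<Rightarrow> (int \<Rightarrow> complex mat) \<Rightarrow> (nat \<Rightarrow> complex Matrix.vec) \<Rightarrow> nat \<Rightarrow> complex Matrix.vec" where
  "toeplitz k F x = (\<lambda>i. Matrix.vec k (\<lambda>l. \<Sum>j. vec_index (F (int i - int j) *\<^sub>v x j) l))"

definition T_op :: "nat \<Rightarrow> nat \<Rightarrow> (complex \<Rightarrow> complex mat) \<Rightarrow> (nat \<Rightarrow> complex Matrix.vec) \<Rightarrow> nat \<Rightarrow> complex Matrix.vec" where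
  "T_op r m \<Phi> = toeplitz r (fourier_coeff r m \<Phi>)"

text \<open>Its Hilbert-space adjoint T_\<Phi>^* : ell^2_+(C^r) \<rightarrow> ell^2_+(C^m), the block operator
  matrix whose (i,j) block is the adjoint of the (j,i) block of T_\<Phi>, i.e. (\<Phi>_{j-i})^*.\<close>
definition T_op_adj :: "nat \<Rightarrow> nat \<Rightarrow> (complex \<Rightarrow> complex mat) \<Rightarrow> (nat \<Rightarrow> complex Matrix.vec) \<Rightarrow> nat \<Rightarrow> complex Matrix.vec" where
  "T_op_adj r m \<Phi> = toeplitz m (\<lambda>k. mat_adjoint (fourier_coeff r m \<Phi> (- k)))"

text \<open>Outer spectral factor of R: \<Phi> \<in> RH^\<infinity>_{r x m}, R = \<Phi>^* \<Phi> on the unit circle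
  (where 1/conj z = z), and T_\<Phi> has dense range in ell^2_+(C^r).\<close>
definition outer_spectral_factor ::
  "nat \<Rightarrow> nat \<Rightarrow> (complex \<Rightarrow> complex mat) \<Rightarrow> (complex \<Rightarrow> complex mat) \<Rightarrow> bool" where
  "outer_spectral_factor r m R \<Phi> \<longleftrightarrow> RH_inf r m \<Phi> \<and>
     (\<forall>\<zeta>. cmod \<zeta> = 1 \<longrightarrow> R \<zeta> = mat_adjoint (\<Phi> (1 / cnj \<zeta>)) * \<Phi> \<zeta>) \<and>
     (\<forall>y. ell2 r y \<longrightarrow> (\<forall>\<epsilon>>0. \<exists>x. ell2 m x \<and>
         (\<Sum>j. vnorm2 (T_op r m \<Phi> x j - y j)) < \<epsilon>))"

definition X_Phi :: "nat \<Rightarrow> nat \<Rightarrow> nat \<Rightarrow> complex mat \<Rightarrow> complex mat \<Rightarrow> (complex \<Rightarrow> complex mat) \<Rightarrow> complex Matrix.vec set" where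
  "X_Phi n r m C A \<Phi> = {x \<in> carrier_vec n. \<exists>y. ell2 r y \<and> W_obs C A x = T_op_adj r m \<Phi> y}"

end

theory Submission
  imports Defs "HOL-Complex_Analysis.Complex_Analysis"
begin

text \<open>
  Since \<open>A\<close> is stable, \<open>(I - z A)\<^sup>-\<^sup>1 = \<Sum>\<^sub>k z\<^sup>k A\<^sup>k\<close> is holomorphic near the closed disc, so the
  Fourier coefficients of \<open>R\<close> of positive index are the Markov parameters \<open>R\<^sub>k\<^sub>+\<^sub>1 = C A\<^sup>k \<Gamma>\<close>.
  Computing the same coefficients from \<open>R = \<Phi>\<^sup>* \<Phi>\<close> on the circle gives
  \<open>C A\<^sup>k \<Gamma> = \<Sum>\<^sub>i \<Phi>\<^sub>i\<^sup>* \<Phi>\<^sub>i\<^sub>+\<^sub>k\<^sub>+\<^sub>1\<close>, i.e. \<open>W\<^sub>o\<^sub>b\<^sub>s \<Gamma> u = T\<^sub>\<Phi>\<^sup>* (\<Phi>\<^sub>j\<^sub>+\<^sub>1 u)\<^sub>j\<close>, so \<open>\<X>\<^sub>\<Phi>\<close>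
  contains the range of \<open>\<Gamma>\<close>. As \<open>\<Phi>\<close> is analytic, \<open>T\<^sub>\<Phi>\<^sup>*\<close> commutes with the backward shift,
  which makes the subspace \<open>\<X>\<^sub>\<Phi>\<close> invariant under \<open>A\<close>; under controllability it is therefore all of
  \<open>\<complex>\<^sup>n\<close>. Invariance also lets the compression \<open>A\<^sub>\<circ>\<close> act as \<open>A\<close> on \<open>\<X>\<^sub>\<Phi>\<close>, and
  \<open>W\<^sub>o\<^sub>b\<^sub>s = T\<^sub>\<Phi>\<^sup>* W\<^sub>\<Phi>\<^sub>,\<^sub>o\<^sub>b\<^sub>s\<close> on \<open>\<X>\<^sub>\<Phi>\<close> transfers injectivity from \<open>W\<^sub>o\<^sub>b\<^sub>s\<close> to \<open>W\<^sub>\<Phi>\<^sub>,\<^sub>o\<^sub>b\<^sub>s\<close>.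
\<close>

section \<open>Fourier coefficients of functions on the unit circle\<close>

definition circle_coeff :: "(complex \<Rightarrow> complex) \<Rightarrow> int \<Rightarrow> complex" where
  "circle_coeff e k = integral {0..2*pi} (\<lambda>t. e (cis t) * cis (- (of_int k * t))) / (2 * pi)"

lemma fourier_coeff_index:
  "a < r \<Longrightarrow> b < m \<Longrightarrow> fourier_coeff r m \<Phi> k $$ (a,b) = circle_coeff (\<lambda>z. \<Phi> z $$ (a,b)) k"
  unfolding fourier_coeff_def circle_coeff_def by simp

lemma fourier_coeff_carrier: "fourier_coeff r m \<Phi> k \<in> carrier_mat r m"
  unfolding fourier_coeff_def by simp

lemma circle_integral_holomorphic:
  fixes g :: "complex \<Rightarrow> complex"
  assumes rho: "1 < \<rho>" and hol: "g holomorphic_on ball 0 \<rho>"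
  shows "((\<lambda>t. g (cis t) * cis (- (real j * t))) has_integral 2*pi * (deriv ^^ j) g 0 / fact j) {0..2*pi}"
proof -
  have cont: "continuous_on (cball 0 1) g"
    using holomorphic_on_imp_continuous_on[OF hol] rho by (auto elim!: continuous_on_subset)
  have hol1: "g holomorphic_on ball 0 1"
    by (rule holomorphic_on_subset[OF hol]) (use rho in auto)
  have "((\<lambda>u. g u / (u - 0) ^ (Suc j)) has_contour_integral ((2 * pi * \<i>) / (fact j) * (deriv ^^ j) g 0))
           (circlepath 0 1)"
    by (rule Cauchy_has_contour_integral_higher_derivative_circlepath[OF cont hol1]) simp
  then have "((\<lambda>t. g (0 + 1 * cis t) / (0 + 1 * cis t - 0) ^ Suc j * 1 * \<i> * cis t) has_integral
        ((2 * pi * \<i>) / (fact j) * (deriv ^^ j) g 0)) {0..2*pi}"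
    unfolding circlepath_def by (subst (asm) has_contour_integral_part_circlepath_iff) auto
  from has_integral_mult_right[OF this, of "- \<i>"]
  have I: "((\<lambda>t. - \<i> * (g (0 + 1 * cis t) / (0 + 1 * cis t - 0) ^ Suc j * 1 * \<i> * cis t)) has_integral
        - \<i> * ((2 * pi * \<i>) / (fact j) * (deriv ^^ j) g 0)) {0..2*pi}" .
  have integrand: "- \<i> * (g (0 + 1 * cis t) / (0 + 1 * cis t - 0) ^ Suc j * 1 * \<i> * cis t)
      = g (cis t) * cis (- (real j * t))" for t
  proof -
    have "cis t ^ Suc j = cis t ^ j * cis t" by simp
    then have "- \<i> * (g (0 + 1 * cis t) / (0 + 1 * cis t - 0) ^ Suc j * 1 * \<i> * cis t) = g (cis t) / cis t ^ j"
      by (simp add: field_simps)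
    also have "\<dots> = g (cis t) * cis (- (real j * t))"
      by (simp add: Complex.DeMoivre divide_inverse flip: cis_inverse)
    finally show ?thesis .
  qed
  have "- \<i> * ((2 * pi * \<i>) / (fact j) * (deriv ^^ j) g 0) = 2*pi * (deriv ^^ j) g 0 / fact j"
    by (simp add: field_simps)
  with I show ?thesis unfolding integrand by simp
qed

lemma circle_integral_holomorphic_negative:
  fixes g :: "complex \<Rightarrow> complex"
  assumes rho: "1 < \<rho>" and hol: "g holomorphic_on ball 0 \<rho>"
  shows "((\<lambda>t. g (cis t) * cis (real (Suc j) * t)) has_integral 0) {0..2*pi}"
proof -
  have "((\<lambda>u. g u * u ^ j) has_contour_integral 0) (circlepath 0 1)"
  proof (rule Cauchy_theorem_convex_simple)
    show "(\<lambda>u. g u * u ^ j) holomorphic_on ball 0 \<rho>" by (intro holomorphic_intros hol)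
    show "path_image (circlepath 0 1) \<subseteq> ball 0 \<rho>" using rho by (auto simp: path_image_circlepath)
  qed auto
  then have "((\<lambda>t. g (0 + 1 * cis t) * (0 + 1 * cis t) ^ j * 1 * \<i> * cis t) has_integral 0) {0..2*pi}"
    unfolding circlepath_def by (subst (asm) has_contour_integral_part_circlepath_iff) auto
  from has_integral_mult_right[OF this, of "- \<i>"]
  have "((\<lambda>t. - \<i> * (g (0 + 1 * cis t) * (0 + 1 * cis t) ^ j * 1 * \<i> * cis t)) has_integral 0) {0..2*pi}"
    by simp
  moreover have "- \<i> * (g (0 + 1 * cis t) * (0 + 1 * cis t) ^ j * 1 * \<i> * cis t)
      = g (cis t) * cis (real (Suc j) * t)" for t
  proof -
    have "- \<i> * (g (0 + 1 * cis t) * (0 + 1 * cis t) ^ j * 1 * \<i> * cis t) = g (cis t) * cis t ^ Suc j"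
      by (simp add: algebra_simps)
    then show ?thesis by (simp only: Complex.DeMoivre)
  qed
  ultimately show ?thesis by (simp only:)
qed

definition holomorphic_near_cdisc :: "(complex \<Rightarrow> complex) \<Rightarrow> bool" where
  "holomorphic_near_cdisc e \<longleftrightarrow>
     (\<exists>g \<rho>. 1 < \<rho> \<and> g holomorphic_on ball 0 \<rho> \<and> (\<forall>z. cmod z \<le> 1 \<longrightarrow> e z = g z))"

lemma circle_coeff_cong:
  assumes "\<And>z. cmod z = 1 \<Longrightarrow> e z = e' z"
  shows "circle_coeff e k = circle_coeff e' k"
  unfolding circle_coeff_def using assms by simp

lemma circle_coeff_holomorphic:
  fixes g :: "complex \<Rightarrow> complex"
  assumes rho: "1 < \<rho>" and hol: "g holomorphic_on ball 0 \<rho>" and eq: "\<And>z. cmod z = 1 \<Longrightarrow> e z = g z"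
  shows "circle_coeff e k = (if k \<ge> 0 then (deriv ^^ nat k) g 0 / fact (nat k) else 0)"
proof -
  have "circle_coeff e k = circle_coeff g k" by (rule circle_coeff_cong) (use eq in auto)
  also have "\<dots> = (if k \<ge> 0 then (deriv ^^ nat k) g 0 / fact (nat k) else 0)"
  proof (cases "k \<ge> 0")
    case True
    then have "- (real_of_int k * t) = - (real (nat k) * t)" for t by simp
    then show ?thesis using True circle_integral_holomorphic[OF rho hol, of "nat k"]
      unfolding circle_coeff_def by (simp add: integral_unique)
  next
    case False
    then have "- (real_of_int k * t) = real (Suc (nat (- k) - 1)) * t" for t by simp
    then show ?thesis using False circle_integral_holomorphic_negative[OF rho hol, of "nat (- k) - 1"]
      unfolding circle_coeff_def by (simp add: integral_unique)
  qed
  finally show ?thesis .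
qed

lemma circle_coeff_holomorphic_near_cdisc:
  assumes "holomorphic_near_cdisc e"
  obtains g where "\<And>k. circle_coeff e k = (if k \<ge> 0 then (deriv ^^ nat k) g 0 / fact (nat k) else 0)"
    and "e 0 = g 0"
proof -
  obtain g \<rho> where *: "1 < \<rho>" "g holomorphic_on ball 0 \<rho>" "\<And>z. cmod z \<le> 1 \<Longrightarrow> e z = g z"
    using assms unfolding holomorphic_near_cdisc_def by blast
  show ?thesis by (rule that[of g]) (auto simp: circle_coeff_holomorphic[OF *(1,2)] *(3))
qed

lemma circle_coeff_neg_eq_0: "holomorphic_near_cdisc e \<Longrightarrow> k < 0 \<Longrightarrow> circle_coeff e k = 0"
  by (metis circle_coeff_holomorphic_near_cdisc not_le)

lemma circle_coeff_0: "holomorphic_near_cdisc e \<Longrightarrow> circle_coeff e 0 = e 0"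
  by (metis circle_coeff_holomorphic_near_cdisc funpow_0 fact_0 div_by_1 nat_zero_as_int order_refl)

lemma circle_coeff_const: "k \<noteq> 0 \<Longrightarrow> circle_coeff (\<lambda>z. c) k = 0"
  by (subst circle_coeff_holomorphic[of 2 "\<lambda>z. c"]) auto

lemma holomorphic_near_cdisc_taylor:
  assumes "holomorphic_near_cdisc e"
  obtains g \<rho> where "1 < \<rho>" "g holomorphic_on ball 0 \<rho>" "\<And>z. cmod z \<le> 1 \<Longrightarrow> e z = g z"
    "\<And>n. circle_coeff e (int n) = (deriv ^^ n) g 0 / fact n"
proof -
  obtain g \<rho> where *: "1 < \<rho>" "g holomorphic_on ball 0 \<rho>" "\<And>z. cmod z \<le> 1 \<Longrightarrow> e z = g z"
    using assms unfolding holomorphic_near_cdisc_def by blast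
  have "circle_coeff e (int n) = (deriv ^^ n) g 0 / fact n" for n
    by (subst circle_coeff_holomorphic[OF *(1,2)]) (auto simp: *(3))
  then show ?thesis using that[OF *] by blast
qed

lemma circle_coeff_geometric_decay:
  assumes "holomorphic_near_cdisc e"
  obtains K q where "0 \<le> K" "0 < q" "q < 1" "\<And>n. cmod (circle_coeff e (int n)) \<le> K * q ^ n"
proof -
  obtain g \<rho> where rho: "1 < \<rho>" and hol: "g holomorphic_on ball 0 \<rho>"
    and coeff: "\<And>n. circle_coeff e (int n) = (deriv ^^ n) g 0 / fact n"
    using assms by (rule holomorphic_near_cdisc_taylor) blast
  define \<rho>' where "\<rho>' = (1 + \<rho>) / 2"
  have r1: "1 < \<rho>'" "\<rho>' < \<rho>" using rho by (auto simp: \<rho>'_def)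
  have hol': "g holomorphic_on ball 0 \<rho>'"
    by (rule holomorphic_on_subset[OF hol]) (use r1 in auto)
  have cont': "continuous_on (cball 0 \<rho>') g"
    by (rule continuous_on_subset[OF holomorphic_on_imp_continuous_on[OF hol]]) (use r1 in auto)
  have "compact (g ` sphere 0 \<rho>')"
    by (rule compact_continuous_image) (auto intro: continuous_on_subset[OF cont'])
  then obtain B where B: "B > 0" "\<And>x. x \<in> g ` sphere 0 \<rho>' \<Longrightarrow> norm x \<le> B"
    using compact_imp_bounded bounded_pos by metis
  have cauchy: "norm ((deriv ^^ n) g 0) \<le> fact n * B / \<rho>' ^ n" for n
  proof (rule Cauchy_inequality[OF hol' cont'])
    show "norm (g x) \<le> B" if "norm (0 - x) = \<rho>'" for x
      using B(2)[of "g x"] that by auto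
  qed (use r1 in auto)
  show ?thesis
  proof (rule that[of B "1/\<rho>'"])
    show "0 \<le> B" "0 < 1/\<rho>'" "1/\<rho>' < 1" using B r1 by auto
    fix n
    have "cmod (circle_coeff e (int n)) = norm ((deriv ^^ n) g 0) / fact n"
      by (simp add: coeff norm_divide)
    also have "\<dots> \<le> (fact n * B / \<rho>' ^ n) / fact n"
      by (rule divide_right_mono[OF cauchy]) simp
    also have "\<dots> = B * (1/\<rho>') ^ n" by (simp add: power_one_over)
    finally show "cmod (circle_coeff e (int n)) \<le> B * (1/\<rho>') ^ n" .
  qed
qed

lemma circle_coeff_sums:
  assumes "holomorphic_near_cdisc e"
  shows "(\<lambda>n. circle_coeff e (int n) * cis (real n * t)) sums e (cis t)"
proof -
  obtain g \<rho> where rho: "1 < \<rho>" and hol: "g holomorphic_on ball 0 \<rho>"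
    and eq: "\<And>z. cmod z \<le> 1 \<Longrightarrow> e z = g z"
    and coeff: "\<And>n. circle_coeff e (int n) = (deriv ^^ n) g 0 / fact n"
    using assms by (rule holomorphic_near_cdisc_taylor) blast
  have "(\<lambda>n. (deriv ^^ n) g 0 / fact n * (cis t - 0) ^ n) sums g (cis t)"
    by (rule holomorphic_power_series[OF hol]) (use rho in auto)
  then show ?thesis by (simp add: coeff eq Complex.DeMoivre)
qed

lemma holomorphic_near_cdisc_continuous_on:
  assumes "holomorphic_near_cdisc e"
  shows "continuous_on (sphere 0 1) e"
proof -
  obtain g \<rho> where rho: "1 < \<rho>" and hol: "g holomorphic_on ball 0 \<rho>"
    and eq: "\<And>z. cmod z \<le> 1 \<Longrightarrow> e z = g z"
    using assms unfolding holomorphic_near_cdisc_def by blast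
  have "continuous_on (sphere 0 1) g"
    by (rule continuous_on_subset[OF holomorphic_on_imp_continuous_on[OF hol]]) (use rho in auto)
  then show ?thesis by (rule continuous_on_eq) (auto simp: eq)
qed

lemma continuous_on_sphere_comp_cis:
  "continuous_on (sphere 0 1) e \<Longrightarrow> continuous_on S (\<lambda>t. e (cis t))"
  by (rule continuous_on_compose2[of "sphere 0 1" e _ cis]) (auto intro!: continuous_intros)

lemma circle_coeff_integrable:
  "continuous_on (sphere 0 1) e \<Longrightarrow> (\<lambda>t. e (cis t) * cis (- (of_int k * t))) integrable_on {0..2*pi}"
  by (intro integrable_continuous_interval continuous_intros continuous_on_sphere_comp_cis)

lemma circle_coeff_add:
  "continuous_on (sphere 0 1) a \<Longrightarrow> continuous_on (sphere 0 1) b \<Longrightarrow>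
     circle_coeff (\<lambda>z. a z + b z) k = circle_coeff a k + circle_coeff b k"
  unfolding circle_coeff_def distrib_right
  by (subst integral_add) (auto intro: circle_coeff_integrable simp: add_divide_distrib)

lemma circle_coeff_cmult: "circle_coeff (\<lambda>z. c * a z) k = c * circle_coeff a k"
  unfolding circle_coeff_def by (simp add: mult.assoc integral_mult_right)

lemma circle_coeff_sum:
  "finite I \<Longrightarrow> (\<And>i. i \<in> I \<Longrightarrow> continuous_on (sphere 0 1) (a i)) \<Longrightarrow>
     circle_coeff (\<lambda>z. \<Sum>i\<in>I. a i z) k = (\<Sum>i\<in>I. circle_coeff (a i) k)"
  unfolding circle_coeff_def sum_distrib_right
  by (subst integral_sum) (auto intro: circle_coeff_integrable simp: sum_divide_distrib)

lemma circle_coeff_mult_ident: "circle_coeff (\<lambda>z. z * e z) (k + 1) = circle_coeff e k"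
proof -
  have "cis t * cis (- (of_int (k + 1) * t)) = cis (- (of_int k * t))" for t
    unfolding cis_mult by (simp add: algebra_simps)
  then have "cis t * e (cis t) * cis (- (of_int (k + 1) * t)) = e (cis t) * cis (- (of_int k * t))" for t
    by (metis mult.assoc mult.commute)
  then show ?thesis unfolding circle_coeff_def by (simp only:)
qed

lemma circle_coeff_cnj: "circle_coeff (\<lambda>z. cnj (e z)) k = cnj (circle_coeff e (- k))"
  unfolding circle_coeff_def by (simp add: integral_cnj cis_cnj)

lemma circle_coeff_has_integral:
  "continuous_on (sphere 0 1) e \<Longrightarrow>
     ((\<lambda>t. e (cis t) * cis (- (of_int k * t))) has_integral 2 * pi * circle_coeff e k) {0..2*pi}"
  using integrable_integral[OF circle_coeff_integrable] by (simp add: circle_coeff_def)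

lemma sums_integral_Weierstrass:
  fixes f :: "nat \<Rightarrow> real \<Rightarrow> 'a::banach"
  assumes cont: "\<And>i. continuous_on {a..b} (f i)" and int: "\<And>i. (f i has_integral c i) {a..b}"
    and bound: "\<And>i t. t \<in> {a..b} \<Longrightarrow> norm (f i t) \<le> M i" and M: "summable M"
  shows "c sums integral {a..b} (\<lambda>t. \<Sum>i. f i t)"
proof -
  have unif: "uniform_limit {a..b} (\<lambda>N t. \<Sum>i<N. f i t) (\<lambda>t. \<Sum>i. f i t) sequentially"
    using bound M by (rule Weierstrass_m_test)
  have "continuous_on {a..b} (\<lambda>t. \<Sum>i<N. f i t)" for N
    by (intro continuous_intros cont)
  then obtain I J where I: "\<And>N. ((\<lambda>t. \<Sum>i<N. f i t) has_integral I N) {a..b}"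
    and J: "((\<lambda>t. \<Sum>i. f i t) has_integral J) {a..b}" and lim: "I \<longlonglongrightarrow> J"
    by (rule uniform_limit_integral[OF unif _ sequentially_bot]) blast
  have "I = (\<lambda>N. \<Sum>i<N. c i)"
    using has_integral_unique[OF I has_integral_sum[OF _ int]] by auto
  then show ?thesis unfolding sums_def using lim J by (simp add: integral_unique)
qed

lemma circle_coeff_cnj_mult_sums:
  assumes ha: "holomorphic_near_cdisc a" and hb: "holomorphic_near_cdisc b"
  shows "(\<lambda>i. cnj (circle_coeff a (int i)) * circle_coeff b (int i + int p))
           sums circle_coeff (\<lambda>z. cnj (a z) * b z) (int p)"
proof -
  obtain K q where K: "0 \<le> K" "0 < q" "q < 1" "\<And>n. cmod (circle_coeff a (int n)) \<le> K * q ^ n"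
    by (rule circle_coeff_geometric_decay[OF ha]) blast
  have cb: "continuous_on (sphere 0 1) b" by (rule holomorphic_near_cdisc_continuous_on[OF hb])
  have "compact ((\<lambda>t. b (cis t)) ` {0..2*pi})"
    by (rule compact_continuous_image[OF continuous_on_sphere_comp_cis[OF cb] compact_Icc])
  then obtain B where B: "B > 0" "\<And>x. x \<in> (\<lambda>t. b (cis t)) ` {0..2*pi} \<Longrightarrow> norm x \<le> B"
    using compact_imp_bounded bounded_pos by metis
  define f where "f i t = cnj (circle_coeff a (int i)) * cis (- (real i * t)) *
                            (b (cis t) * cis (- (of_int (int p) * t)))" for i t
  have f_eq: "f i t = cnj (circle_coeff a (int i)) * (b (cis t) * cis (- (of_int (int i + int p) * t)))" for i t
  proof -
    have "cis (- (real i * t)) * cis (- (of_int (int p) * t)) = cis (- (of_int (int i + int p) * t))"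
      unfolding cis_mult by (simp add: algebra_simps)
    then show ?thesis unfolding f_def by (simp add: algebra_simps)
  qed
  have termwise: "(\<lambda>i. cnj (circle_coeff a (int i)) * (2 * pi * circle_coeff b (int i + int p)))
      sums integral {0..2*pi} (\<lambda>t. \<Sum>i. f i t)"
  proof (rule sums_integral_Weierstrass)
    show "continuous_on {0..2*pi} (f i)" for i
      unfolding f_def by (intro continuous_intros continuous_on_sphere_comp_cis[OF cb])
    show "(f i has_integral cnj (circle_coeff a (int i)) * (2 * pi * circle_coeff b (int i + int p))) {0..2*pi}"
      for i unfolding f_eq by (intro has_integral_mult_right circle_coeff_has_integral cb)
    show "norm (f i t) \<le> K * q ^ i * B" if "t \<in> {0..2*pi}" for i t
      unfolding f_eq norm_mult using K B(2)[of "b (cis t)"] that by (auto intro!: mult_mono)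
    show "summable (\<lambda>i. K * q ^ i * B)"
      by (rule summable_mult2, rule summable_mult, rule summable_geometric) (use K in auto)
  qed
  have f_sums: "(\<lambda>i. f i t) sums (cnj (a (cis t)) * b (cis t) * cis (- (of_int (int p) * t)))" for t
  proof -
    have "(\<lambda>i. cnj (circle_coeff a (int i) * cis (real i * t))) sums cnj (a (cis t))"
      by (subst sums_cnj) (rule circle_coeff_sums[OF ha])
    then have "(\<lambda>i. cnj (circle_coeff a (int i)) * cis (- (real i * t))) sums cnj (a (cis t))"
      by (simp add: cis_cnj)
    from sums_mult2[OF this, of "b (cis t) * cis (- (of_int (int p) * t))"] show ?thesis
      unfolding f_def by (simp add: mult.assoc)
  qed
  have "(\<lambda>t. \<Sum>i. f i t) = (\<lambda>t. cnj (a (cis t)) * b (cis t) * cis (- (of_int (int p) * t)))"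
    by (rule ext, rule sums_unique[symmetric, OF f_sums])
  then have "integral {0..2*pi} (\<lambda>t. \<Sum>i. f i t) = 2 * pi * circle_coeff (\<lambda>z. cnj (a z) * b z) (int p)"
    unfolding circle_coeff_def by simp
  with sums_divide[OF termwise, of "2 * pi"] show ?thesis by simp
qed

lemma holomorphic_near_cdisc_const: "holomorphic_near_cdisc (\<lambda>z. c)"
  unfolding holomorphic_near_cdisc_def by (rule exI[of _ "\<lambda>z. c"], rule exI[of _ 2]) auto

lemma holomorphic_near_cdisc_ident: "holomorphic_near_cdisc (\<lambda>z. z)"
  unfolding holomorphic_near_cdisc_def by (rule exI[of _ "\<lambda>z. z"], rule exI[of _ 2]) auto

lemma holomorphic_near_cdisc_cong:
  "(\<And>z. cmod z \<le> 1 \<Longrightarrow> e z = e' z) \<Longrightarrow> holomorphic_near_cdisc e' \<Longrightarrow> holomorphic_near_cdisc e"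
  unfolding holomorphic_near_cdisc_def by metis

lemma holomorphic_near_cdisc_binop:
  assumes "holomorphic_near_cdisc a" "holomorphic_near_cdisc b"
    and hol: "\<And>f g S. f holomorphic_on S \<Longrightarrow> g holomorphic_on S \<Longrightarrow> (\<lambda>z. h (f z) (g z)) holomorphic_on S"
  shows "holomorphic_near_cdisc (\<lambda>z. h (a z) (b z))"
proof -
  obtain f \<rho> where f: "1 < \<rho>" "f holomorphic_on ball 0 \<rho>" "\<And>z. cmod z \<le> 1 \<Longrightarrow> a z = f z"
    using assms(1) unfolding holomorphic_near_cdisc_def by blast
  obtain g \<sigma> where g: "1 < \<sigma>" "g holomorphic_on ball 0 \<sigma>" "\<And>z. cmod z \<le> 1 \<Longrightarrow> b z = g z"
    using assms(2) unfolding holomorphic_near_cdisc_def by blast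
  have "f holomorphic_on ball 0 (min \<rho> \<sigma>)" "g holomorphic_on ball 0 (min \<rho> \<sigma>)"
    using f(2) g(2) by (auto elim!: holomorphic_on_subset)
  then have "(\<lambda>z. h (f z) (g z)) holomorphic_on ball 0 (min \<rho> \<sigma>)" by (rule hol)
  then show ?thesis unfolding holomorphic_near_cdisc_def using f g
    by (intro exI[of _ "\<lambda>z. h (f z) (g z)"] exI[of _ "min \<rho> \<sigma>"]) auto
qed

lemma holomorphic_near_cdisc_add:
  "holomorphic_near_cdisc a \<Longrightarrow> holomorphic_near_cdisc b \<Longrightarrow> holomorphic_near_cdisc (\<lambda>z. a z + b z)"
  by (rule holomorphic_near_cdisc_binop[where h="(+)"], assumption, assumption, rule holomorphic_on_add)

lemma holomorphic_near_cdisc_mult: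
  "holomorphic_near_cdisc a \<Longrightarrow> holomorphic_near_cdisc b \<Longrightarrow> holomorphic_near_cdisc (\<lambda>z. a z * b z)"
  by (rule holomorphic_near_cdisc_binop[where h="(*)"], assumption, assumption, rule holomorphic_on_mult)

lemma holomorphic_near_cdisc_cmult: "holomorphic_near_cdisc a \<Longrightarrow> holomorphic_near_cdisc (\<lambda>z. c * a z)"
  by (rule holomorphic_near_cdisc_mult[OF holomorphic_near_cdisc_const])

lemma holomorphic_near_cdisc_sum:
  "finite I \<Longrightarrow> (\<And>i. i \<in> I \<Longrightarrow> holomorphic_near_cdisc (a i)) \<Longrightarrow>
     holomorphic_near_cdisc (\<lambda>z. \<Sum>i\<in>I. a i z)"
proof (induction I rule: finite_induct)
  case empty then show ?case using holomorphic_near_cdisc_const[of 0] by simp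
next
  case (insert x F) then show ?case by (simp add: holomorphic_near_cdisc_add)
qed

lemma finite_set_norm_gt_1:
  assumes "finite S" "\<And>z. z \<in> S \<Longrightarrow> 1 < cmod z"
  obtains \<rho> where "1 < \<rho>" "\<And>z. z \<in> S \<Longrightarrow> \<rho> \<le> cmod z"
proof (cases "S = {}")
  case True then show ?thesis using that[of 2] by auto
next
  case False
  then have "1 < Min (cmod ` S)" using Min_in[of "cmod ` S"] assms by auto
  moreover have "Min (cmod ` S) \<le> cmod z" if "z \<in> S" for z using assms(1) that by simp
  ultimately show ?thesis using that by blast
qed

lemma holomorphic_near_cdisc_rational:
  assumes "\<forall>z. cmod z \<le> 1 \<longrightarrow> poly q z \<noteq> 0 \<and> e z = poly p z / poly q z"
  shows "holomorphic_near_cdisc e"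
proof -
  have "q \<noteq> 0" using assms[rule_format, of 0] by auto
  then have fin: "finite {z. poly q z = 0}" by (rule poly_roots_finite)
  have "1 < cmod z" if "poly q z = 0" for z using assms that not_le by blast
  then obtain \<rho> where rho: "1 < \<rho>" "\<And>z. poly q z = 0 \<Longrightarrow> \<rho> \<le> cmod z"
    using finite_set_norm_gt_1[OF fin] by auto
  have "(\<lambda>z. poly p z / poly q z) holomorphic_on ball 0 \<rho>"
  proof (intro holomorphic_intros)
    show "poly q z \<noteq> 0" if "z \<in> ball 0 \<rho>" for z using rho(2) that by force
  qed
  then show ?thesis unfolding holomorphic_near_cdisc_def using rho(1) assms by blast
qed

lemma RH_inf_entry_holomorphic_near_cdisc:
  "RH_inf r m \<Phi> \<Longrightarrow> a < r \<Longrightarrow> b < m \<Longrightarrow> holomorphic_near_cdisc (\<lambda>z. \<Phi> z $$ (a,b))"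
  unfolding RH_inf_def by (blast intro: holomorphic_near_cdisc_rational)

lemma index_mult_mat_sum:
  assumes "A \<in> carrier_mat a k" "B \<in> carrier_mat k b" "i < a" "j < b"
  shows "(A * B) $$ (i,j) = (\<Sum>l<k. A $$ (i,l) * B $$ (l,j))"
  using assms by (auto simp: scalar_prod_def lessThan_atLeast0 intro!: sum.cong)

lemma index_mult_mat_vec_sum:
  assumes "M \<in> carrier_mat p q" "u \<in> carrier_vec q" "l < p"
  shows "vec_index (M *\<^sub>v u) l = (\<Sum>b<q. M $$ (l,b) * vec_index u b)"
  using assms by (auto simp: scalar_prod_def lessThan_atLeast0 intro!: sum.cong)

lemma index_triple_mult_mat:
  fixes C X G :: "complex mat"
  assumes C: "C \<in> carrier_mat p n" and X: "X \<in> carrier_mat n n" and G: "G \<in> carrier_mat n q"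
    and a: "a < p" and b: "b < q"
  shows "(C * X * G) $$ (a,b) = (\<Sum>d<n. \<Sum>c<n. (C $$ (a,c) * G $$ (d,b)) * X $$ (c,d))"
proof -
  have "(C * X * G) $$ (a,b) = (\<Sum>d<n. (C * X) $$ (a,d) * G $$ (d,b))"
    by (rule index_mult_mat_sum) (use C X G a b in auto)
  also have "\<dots> = (\<Sum>d<n. (\<Sum>c<n. C $$ (a,c) * X $$ (c,d)) * G $$ (d,b))"
    by (rule sum.cong[OF refl]) (simp add: index_mult_mat_sum[OF C X a])
  also have "\<dots> = (\<Sum>d<n. \<Sum>c<n. (C $$ (a,c) * G $$ (d,b)) * X $$ (c,d))"
    unfolding sum_distrib_right by (intro sum.cong refl) (simp only: mult_ac)
  finally show ?thesis .
qed

lemma carrier_mat_adjoint: "A \<in> carrier_mat a b \<Longrightarrow> mat_adjoint A \<in> carrier_mat b a"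
  unfolding mat_adjoint_def by auto

lemma index_mat_adjoint:
  assumes "A \<in> carrier_mat a b" "i < b" "j < a"
  shows "mat_adjoint A $$ (i,j) = cnj (A $$ (j,i))"
  using assms unfolding mat_adjoint_def by (simp add: mat_of_rows_index)

lemma index_adjoint_triple_mult:
  fixes C X G :: "complex mat"
  assumes C: "C \<in> carrier_mat p n" and X: "X \<in> carrier_mat n n" and G: "G \<in> carrier_mat n q"
    and l: "l < q" and b: "b < p"
  shows "(mat_adjoint G * mat_adjoint X * mat_adjoint C) $$ (l,b) = cnj ((C * X * G) $$ (b,l))"
proof -
  have "(mat_adjoint G * mat_adjoint X * mat_adjoint C) $$ (l,b) =
     (\<Sum>d<n. \<Sum>c<n. (mat_adjoint G $$ (l,c) * mat_adjoint C $$ (d,b)) * mat_adjoint X $$ (c,d))"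
    by (rule index_triple_mult_mat[OF carrier_mat_adjoint[OF G] carrier_mat_adjoint[OF X]
          carrier_mat_adjoint[OF C] l b])
  also have "\<dots> = (\<Sum>d<n. \<Sum>c<n. cnj (G $$ (c,l)) * cnj (C $$ (b,d)) * cnj (X $$ (d,c)))"
    using C X G l b by (intro sum.cong refl) (simp add: index_mat_adjoint)
  also have "\<dots> = (\<Sum>c<n. \<Sum>d<n. cnj (G $$ (c,l)) * cnj (C $$ (b,d)) * cnj (X $$ (d,c)))"
    by (rule sum.swap)
  also have "\<dots> = cnj ((C * X * G) $$ (b,l))"
    by (simp add: index_triple_mult_mat[OF C X G b l] mult_ac)
  finally show ?thesis .
qed

lemma pow_mat_Suc_left:
  assumes A: "A \<in> carrier_mat n n"
  shows "A ^\<^sub>m Suc k = A * A ^\<^sub>m k"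
proof (induction k)
  case (Suc k)
  have "A ^\<^sub>m Suc (Suc k) = (A * A ^\<^sub>m k) * A" using Suc by simp
  also have "\<dots> = A * (A ^\<^sub>m k * A)" using A by (simp add: assoc_mult_mat[of _ n n _ n _ n])
  finally show ?case by simp
qed (use A in simp)

lemma funpow_mult_mat_vec:
  assumes A: "A \<in> carrier_mat n n" and x: "x \<in> carrier_vec n"
  shows "((\<lambda>v. A *\<^sub>v v) ^^ j) x = (A ^\<^sub>m j) *\<^sub>v x"
proof (induction j)
  case (Suc j)
  have "((\<lambda>v. A *\<^sub>v v) ^^ Suc j) x = A *\<^sub>v ((A ^\<^sub>m j) *\<^sub>v x)" using Suc by simp
  also have "\<dots> = (A * A ^\<^sub>m j) *\<^sub>v x" using A x by (simp add: assoc_mult_mat_vec[of _ n n _ n])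
  finally show ?case by (simp only: pow_mat_Suc_left[OF A])
qed (use A x in simp)

lemma mult_mat_vec_zero: "A \<in> carrier_mat a b \<Longrightarrow> A *\<^sub>v 0\<^sub>v b = (0\<^sub>v a :: complex Matrix.vec)"
  by (auto intro!: eq_vecI simp: scalar_prod_def)

lemma minv_eqI:
  assumes M: "M \<in> carrier_mat n n" and B: "B \<in> carrier_mat n n"
    and MB: "M * B = 1\<^sub>m n" and BM: "B * M = 1\<^sub>m n"
  shows "minv n M = B"
proof -
  have "\<exists>B. B \<in> carrier_mat n n \<and> M * B = 1\<^sub>m n \<and> B * M = 1\<^sub>m n" using B MB BM by blast
  then have B': "minv n M \<in> carrier_mat n n" "minv n M * M = 1\<^sub>m n"
    unfolding minv_def by (metis (mono_tags, lifting) someI_ex)+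
  have "minv n M = minv n M * (M * B)" using B'(1) by (simp add: MB)
  also have "\<dots> = (minv n M * M) * B" by (rule assoc_mult_mat[symmetric, OF B'(1) M B])
  finally show ?thesis using B'(2) B by simp
qed

lemma inverse_adj_mat:
  fixes M :: "complex mat"
  assumes M: "M \<in> carrier_mat n n" and d: "Determinant.det M \<noteq> 0"
  shows "M * ((1 / Determinant.det M) \<cdot>\<^sub>m adj_mat M) = 1\<^sub>m n" "((1 / Determinant.det M) \<cdot>\<^sub>m adj_mat M) * M = 1\<^sub>m n"
proof -
  note adj = adj_mat[OF M]
  have "M * ((1 / Determinant.det M) \<cdot>\<^sub>m adj_mat M) = (1 / Determinant.det M) \<cdot>\<^sub>m (M * adj_mat M)"
    using mult_smult_distrib[OF M adj(1)] .
  also have "\<dots> = 1\<^sub>m n" unfolding adj(2) using d by (auto intro!: eq_matI)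
  finally show "M * ((1 / Determinant.det M) \<cdot>\<^sub>m adj_mat M) = 1\<^sub>m n" .
  have "((1 / Determinant.det M) \<cdot>\<^sub>m adj_mat M) * M = (1 / Determinant.det M) \<cdot>\<^sub>m (adj_mat M * M)"
    using mult_smult_assoc_mat[OF adj(1) M] .
  also have "\<dots> = 1\<^sub>m n" unfolding adj(3) using d by (auto intro!: eq_matI)
  finally show "((1 / Determinant.det M) \<cdot>\<^sub>m adj_mat M) * M = 1\<^sub>m n" .
qed

lemma minv_adj_mat:
  assumes M: "M \<in> carrier_mat n n" and d: "Determinant.det M \<noteq> 0"
  shows "minv n M = (1 / Determinant.det M) \<cdot>\<^sub>m adj_mat M"
  using minv_eqI[OF M _ inverse_adj_mat[OF M d]] adj_mat(1)[OF M] by simp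

lemma minv_inverse:
  assumes M: "M \<in> carrier_mat n n" and d: "Determinant.det M \<noteq> 0"
  shows "minv n M \<in> carrier_mat n n" "M * minv n M = 1\<^sub>m n" "minv n M * M = 1\<^sub>m n"
  unfolding minv_adj_mat[OF M d] using inverse_adj_mat[OF M d] adj_mat(1)[OF M] by auto

lemma holomorphic_on_det:
  assumes M: "\<And>z. M z \<in> carrier_mat k k"
    and hol: "\<And>i j. i < k \<Longrightarrow> j < k \<Longrightarrow> (\<lambda>z. M z $$ (i,j)) holomorphic_on S"
  shows "(\<lambda>z. Determinant.det (M z)) holomorphic_on S"
proof -
  have "(\<lambda>z. \<Sum>p \<in> {p. p permutes {0 ..< k}}. signof p * (\<Prod>i = 0 ..< k. M z $$ (i, p i)))
          holomorphic_on S"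
  proof (intro holomorphic_on_sum holomorphic_on_mult holomorphic_on_const holomorphic_on_prod)
    fix p i assume p: "p \<in> {p. p permutes {0..<k}}" and i: "i \<in> {0..<k}"
    have "p i < k" using p i permutes_in_image by fastforce
    then show "(\<lambda>z. M z $$ (i, p i)) holomorphic_on S" using hol i by auto
  qed
  then show ?thesis by (simp only: det_def'[OF M])
qed

lemma holomorphic_on_adj_mat_index:
  assumes M: "\<And>z. M z \<in> carrier_mat k k"
    and hol: "\<And>i j. i < k \<Longrightarrow> j < k \<Longrightarrow> (\<lambda>z. M z $$ (i,j)) holomorphic_on S"
    and ij: "i < k" "j < k"
  shows "(\<lambda>z. adj_mat (M z) $$ (i,j)) holomorphic_on S"
proof -
  have cofactor: "adj_mat (M z) $$ (i,j) = (-1)^(j+i) * Determinant.det (mat_delete (M z) j i)" for z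
    using M[of z] ij unfolding adj_mat_def cofactor_def by auto
  have "(\<lambda>z. Determinant.det (mat_delete (M z) j i)) holomorphic_on S"
  proof (rule holomorphic_on_det[of _ "k - 1"])
    show "mat_delete (M z) j i \<in> carrier_mat (k - 1) (k - 1)" for z by (rule mat_delete_carrier[OF M])
    fix a b assume ab: "a < k - 1" "b < k - 1"
    have "mat_delete (M z) j i $$ (a,b) = M z $$ (if a < j then a else Suc a, if b < i then b else Suc b)" for z
      using M[of z] ab unfolding mat_delete_def by auto
    then show "(\<lambda>z. mat_delete (M z) j i $$ (a, b)) holomorphic_on S"
      using hol ab by (simp del: One_nat_def)
  qed
  then show ?thesis unfolding cofactor by (intro holomorphic_intros)
qed

section \<open>The resolvent of a stable matrix\<close>

definition resolvent_mat :: "nat \<Rightarrow> complex mat \<Rightarrow> complex \<Rightarrow> complex mat" where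
  "resolvent_mat n A z = minv n (1\<^sub>m n - z \<cdot>\<^sub>m A)"

lemma one_minus_smult_mat_char_matrix:
  fixes A :: "complex mat"
  assumes A: "A \<in> carrier_mat n n" and z: "z \<noteq> 0"
  shows "1\<^sub>m n - z \<cdot>\<^sub>m A = (- z) \<cdot>\<^sub>m char_matrix A (1 / z)"
  unfolding char_matrix_def using A z by (auto intro!: eq_matI simp: field_simps)

text \<open>\<open>1 - z A\<close> is singular only at the reciprocals of the eigenvalues, which lie outside the closed
  disc and are finitely many.\<close>

lemma stable_mat_det_nonzero:
  assumes st: "stable_mat n A"
  obtains \<rho> where "1 < \<rho>" "\<And>z. cmod z < \<rho> \<Longrightarrow> Determinant.det (1\<^sub>m n - z \<cdot>\<^sub>m A) \<noteq> 0"
proof -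
  have A: "A \<in> carrier_mat n n" and ev: "\<And>k. eigenvalue A k \<Longrightarrow> cmod k < 1"
    using st unfolding stable_mat_def by auto
  define F where "F = {z. Determinant.det (1\<^sub>m n - z \<cdot>\<^sub>m A) = 0}"
  have reciprocal_eigenvalue: "z \<noteq> 0 \<and> eigenvalue A (1 / z)" if "z \<in> F" for z
  proof -
    have d: "Determinant.det (1\<^sub>m n - z \<cdot>\<^sub>m A) = 0" using that unfolding F_def by simp
    have z0: "z \<noteq> 0"
    proof
      assume "z = 0"
      then have "1\<^sub>m n - z \<cdot>\<^sub>m A = 1\<^sub>m n" using A by (auto intro!: eq_matI)
      then show False using d by simp
    qed
    have "(- z) ^ n * Determinant.det (char_matrix A (1 / z)) = 0"
      using d unfolding one_minus_smult_mat_char_matrix[OF A z0] using A by (simp add: char_matrix_def)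
    then show ?thesis using z0 eigenvalue_det[OF A] by simp
  qed
  have "F \<subseteq> (\<lambda>k. 1 / k) ` {k. poly (char_poly A) k = 0}"
  proof
    fix z assume "z \<in> F"
    with reciprocal_eigenvalue have "z = 1 / (1 / z)" "poly (char_poly A) (1 / z) = 0"
      using eigenvalue_root_char_poly[OF A] by auto
    then show "z \<in> (\<lambda>k. 1 / k) ` {k. poly (char_poly A) k = 0}" by blast
  qed
  moreover have "finite {k. poly (char_poly A) k = 0}"
    using degree_monic_char_poly[OF A] by (intro poly_roots_finite) auto
  ultimately have finF: "finite F" by (rule finite_subset[OF _ finite_imageI])
  have gt_1: "1 < cmod z" if "z \<in> F" for z
  proof -
    have "z \<noteq> 0" "cmod (1 / z) < 1" using ev reciprocal_eigenvalue[OF that] by auto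
    then show ?thesis by (simp add: norm_divide divide_less_eq)
  qed
  obtain \<rho> where rho: "1 < \<rho>" "\<And>z. z \<in> F \<Longrightarrow> \<rho> \<le> cmod z"
    using finite_set_norm_gt_1[OF finF gt_1] by auto
  show ?thesis
  proof (rule that[OF rho(1)])
    fix z assume "cmod z < \<rho>"
    then have "z \<notin> F" using rho(2) by force
    then show "Determinant.det (1\<^sub>m n - z \<cdot>\<^sub>m A) \<noteq> 0" unfolding F_def by simp
  qed
qed

context
  fixes n :: nat and A :: "complex mat"
  assumes st: "stable_mat n A"
begin

lemma stable_mat_carrier: "A \<in> carrier_mat n n"
  using st unfolding stable_mat_def by auto

lemma resolvent_mat_inverse:
  assumes "cmod z \<le> 1"
  shows "resolvent_mat n A z \<in> carrier_mat n n"
    "(1\<^sub>m n - z \<cdot>\<^sub>m A) * resolvent_mat n A z = 1\<^sub>m n"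
    "resolvent_mat n A z * (1\<^sub>m n - z \<cdot>\<^sub>m A) = 1\<^sub>m n"
proof -
  obtain \<rho> where "1 < \<rho>" "\<And>z. cmod z < \<rho> \<Longrightarrow> Determinant.det (1\<^sub>m n - z \<cdot>\<^sub>m A) \<noteq> 0"
    by (rule stable_mat_det_nonzero[OF st]) blast
  then have "Determinant.det (1\<^sub>m n - z \<cdot>\<^sub>m A) \<noteq> 0" using assms by auto
  moreover have "1\<^sub>m n - z \<cdot>\<^sub>m A \<in> carrier_mat n n" using stable_mat_carrier by auto
  ultimately show "resolvent_mat n A z \<in> carrier_mat n n"
    "(1\<^sub>m n - z \<cdot>\<^sub>m A) * resolvent_mat n A z = 1\<^sub>m n"
    "resolvent_mat n A z * (1\<^sub>m n - z \<cdot>\<^sub>m A) = 1\<^sub>m n"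
    unfolding resolvent_mat_def using minv_inverse by blast+
qed

lemma holomorphic_near_cdisc_resolvent_mat:
  assumes c: "c < n" and d: "d < n"
  shows "holomorphic_near_cdisc (\<lambda>z. resolvent_mat n A z $$ (c,d))"
proof -
  obtain \<rho> where rho: "1 < \<rho>"
    and det_nz: "\<And>z. cmod z < \<rho> \<Longrightarrow> Determinant.det (1\<^sub>m n - z \<cdot>\<^sub>m A) \<noteq> 0"
    by (rule stable_mat_det_nonzero[OF st]) blast
  have car: "1\<^sub>m n - z \<cdot>\<^sub>m A \<in> carrier_mat n n" for z using stable_mat_carrier by auto
  have entries: "(\<lambda>z. (1\<^sub>m n - z \<cdot>\<^sub>m A) $$ (i,j)) holomorphic_on ball 0 \<rho>" if "i < n" "j < n" for i j
  proof -
    have "(\<lambda>z. (1\<^sub>m n - z \<cdot>\<^sub>m A) $$ (i,j)) = (\<lambda>z. (if i = j then 1 else 0) - z * A $$ (i,j))"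
      using that stable_mat_carrier by (auto simp: fun_eq_iff)
    then show ?thesis by (auto intro!: holomorphic_intros)
  qed
  have "(\<lambda>z. adj_mat (1\<^sub>m n - z \<cdot>\<^sub>m A) $$ (c,d) / Determinant.det (1\<^sub>m n - z \<cdot>\<^sub>m A))
          holomorphic_on ball 0 \<rho>"
    by (rule holomorphic_on_divide[OF holomorphic_on_adj_mat_index[OF car entries c d]
          holomorphic_on_det[OF car entries]]) (use det_nz in auto)
  moreover have "resolvent_mat n A z $$ (c,d) =
      adj_mat (1\<^sub>m n - z \<cdot>\<^sub>m A) $$ (c,d) / Determinant.det (1\<^sub>m n - z \<cdot>\<^sub>m A)" if "cmod z < \<rho>" for z
    unfolding resolvent_mat_def minv_adj_mat[OF car det_nz[OF that]]
    using adj_mat(1)[OF car[of z]] c d by (simp add: carrier_matD)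
  ultimately show ?thesis unfolding holomorphic_near_cdisc_def using rho by force
qed

lemma resolvent_mat_index_eq:
  assumes z: "cmod z \<le> 1" and c: "c < n" and d: "d < n"
  shows "resolvent_mat n A z $$ (c,d) =
    (if c = d then 1 else 0) + z * (\<Sum>e<n. A $$ (c,e) * resolvent_mat n A z $$ (e,d))"
proof -
  note inv = resolvent_mat_inverse[OF z]
  have car: "1\<^sub>m n - z \<cdot>\<^sub>m A \<in> carrier_mat n n" using stable_mat_carrier by auto
  have "(if c = d then 1 else 0) = ((1\<^sub>m n - z \<cdot>\<^sub>m A) * resolvent_mat n A z) $$ (c,d)"
    using inv(2) c d by simp
  also have "\<dots> = (\<Sum>e<n. (1\<^sub>m n - z \<cdot>\<^sub>m A) $$ (c,e) * resolvent_mat n A z $$ (e,d))"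
    by (rule index_mult_mat_sum[OF car inv(1) c d])
  also have "\<dots> = (\<Sum>e<n. (if c = e then resolvent_mat n A z $$ (e,d) else 0)
                         - z * (A $$ (c,e) * resolvent_mat n A z $$ (e,d)))"
    by (rule sum.cong) (use c stable_mat_carrier in \<open>auto simp: algebra_simps\<close>)
  also have "\<dots> = resolvent_mat n A z $$ (c,d) - z * (\<Sum>e<n. A $$ (c,e) * resolvent_mat n A z $$ (e,d))"
    using c by (simp add: sum_subtractf sum_distrib_left)
  finally show ?thesis by (simp add: algebra_simps)
qed

lemma resolvent_mat_0: "resolvent_mat n A 0 = 1\<^sub>m n"
proof -
  have "1\<^sub>m n - 0 \<cdot>\<^sub>m A = 1\<^sub>m n" using stable_mat_carrier by (auto intro!: eq_matI)
  then show ?thesis unfolding resolvent_mat_def by (simp add: minv_eqI[of "1\<^sub>m n" n "1\<^sub>m n"])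
qed

text \<open>Read off from the identity \<open>M(z) = 1 + z A M(z)\<close> by induction: \<open>(1 - z A)\<^sup>-\<^sup>1 = \<Sum> z\<^sup>k A\<^sup>k\<close>.\<close>

lemma circle_coeff_resolvent_mat:
  "c < n \<Longrightarrow> d < n \<Longrightarrow> circle_coeff (\<lambda>z. resolvent_mat n A z $$ (c,d)) (int k) = (A ^\<^sub>m k) $$ (c,d)"
proof (induction k arbitrary: c d)
  case 0
  then show ?case using circle_coeff_0[OF holomorphic_near_cdisc_resolvent_mat[OF 0]] stable_mat_carrier
    by (simp add: resolvent_mat_0)
next
  case (Suc k)
  define S where "S z = (\<Sum>e<n. A $$ (c,e) * resolvent_mat n A z $$ (e,d))" for z
  have hS: "holomorphic_near_cdisc S" unfolding S_def
    by (intro holomorphic_near_cdisc_sum holomorphic_near_cdisc_cmult holomorphic_near_cdisc_resolvent_mat)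
      (use Suc.prems in auto)
  have cont: "continuous_on (sphere 0 1) (\<lambda>z. z * S z)"
    by (intro holomorphic_near_cdisc_continuous_on holomorphic_near_cdisc_mult
        holomorphic_near_cdisc_ident hS)
  have "circle_coeff (\<lambda>z. resolvent_mat n A z $$ (c,d)) (int (Suc k))
      = circle_coeff (\<lambda>z. (if c = d then 1 else 0) + z * S z) (int k + 1)"
    unfolding S_def Suc_eq_plus1 of_nat_add of_nat_1
    by (rule circle_coeff_cong, rule resolvent_mat_index_eq) (use Suc.prems in auto)
  also have "\<dots> = circle_coeff S (int k)"
    by (simp add: circle_coeff_add[OF continuous_on_const cont] circle_coeff_const circle_coeff_mult_ident)
  also have "\<dots> = (\<Sum>e<n. A $$ (c,e) * (A ^\<^sub>m k) $$ (e,d))"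
    unfolding S_def using Suc
    by (subst circle_coeff_sum) (auto intro!: holomorphic_near_cdisc_continuous_on
        holomorphic_near_cdisc_cmult holomorphic_near_cdisc_resolvent_mat simp: circle_coeff_cmult)
  also have "\<dots> = (A * A ^\<^sub>m k) $$ (c,d)"
    by (rule index_mult_mat_sum[symmetric, OF stable_mat_carrier _ Suc.prems]) (use stable_mat_carrier in simp)
  finally show ?case by (simp only: pow_mat_Suc_left[OF stable_mat_carrier])
qed

lemma index_triple_resolvent_mat:
  assumes "C \<in> carrier_mat p n" "G \<in> carrier_mat n q" "a < p" "b < q" "cmod z \<le> 1"
  shows "(C * resolvent_mat n A z * G) $$ (a,b) =
    (\<Sum>d<n. \<Sum>c<n. (C $$ (a,c) * G $$ (d,b)) * resolvent_mat n A z $$ (c,d))"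
  by (rule index_triple_mult_mat[OF assms(1) resolvent_mat_inverse(1)[OF assms(5)] assms(2-4)])

lemma holomorphic_near_cdisc_triple_resolvent_mat:
  assumes "C \<in> carrier_mat p n" "G \<in> carrier_mat n q" "a < p" "b < q"
  shows "holomorphic_near_cdisc (\<lambda>z. (C * resolvent_mat n A z * G) $$ (a,b))"
proof (rule holomorphic_near_cdisc_cong)
  show "holomorphic_near_cdisc
      (\<lambda>z. \<Sum>d<n. \<Sum>c<n. (C $$ (a,c) * G $$ (d,b)) * resolvent_mat n A z $$ (c,d))"
    by (intro holomorphic_near_cdisc_sum holomorphic_near_cdisc_cmult holomorphic_near_cdisc_resolvent_mat) auto
qed (rule index_triple_resolvent_mat[OF assms])

lemma circle_coeff_triple_resolvent_mat:
  assumes C: "C \<in> carrier_mat p n" and G: "G \<in> carrier_mat n q" and a: "a < p" and b: "b < q"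
  shows "circle_coeff (\<lambda>z. (C * resolvent_mat n A z * G) $$ (a,b)) (int k) = (C * A ^\<^sub>m k * G) $$ (a,b)"
proof -
  have "circle_coeff (\<lambda>z. (C * resolvent_mat n A z * G) $$ (a,b)) (int k) =
        circle_coeff (\<lambda>z. \<Sum>d<n. \<Sum>c<n. (C $$ (a,c) * G $$ (d,b)) * resolvent_mat n A z $$ (c,d)) (int k)"
    by (rule circle_coeff_cong) (simp add: index_triple_resolvent_mat[OF C G a b])
  also have "\<dots> = (\<Sum>d<n. circle_coeff (\<lambda>z. \<Sum>c<n. (C $$ (a,c) * G $$ (d,b)) * resolvent_mat n A z $$ (c,d))
                         (int k))"
    by (rule circle_coeff_sum) (auto intro!: holomorphic_near_cdisc_continuous_on holomorphic_near_cdisc_sum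
        holomorphic_near_cdisc_cmult holomorphic_near_cdisc_resolvent_mat)
  also have "\<dots> = (\<Sum>d<n. \<Sum>c<n. circle_coeff (\<lambda>z. (C $$ (a,c) * G $$ (d,b)) * resolvent_mat n A z $$ (c,d))
                         (int k))"
    by (rule sum.cong[OF refl], rule circle_coeff_sum)
      (auto intro!: holomorphic_near_cdisc_continuous_on holomorphic_near_cdisc_cmult
        holomorphic_near_cdisc_resolvent_mat)
  also have "\<dots> = (\<Sum>d<n. \<Sum>c<n. (C $$ (a,c) * G $$ (d,b)) * (A ^\<^sub>m k) $$ (c,d))"
    by (simp add: circle_coeff_cmult circle_coeff_resolvent_mat)
  also have "\<dots> = (C * A ^\<^sub>m k * G) $$ (a,b)"
    by (rule index_triple_mult_mat[symmetric, OF C _ G a b]) (use stable_mat_carrier in simp)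
  finally show ?thesis .
qed

text \<open>On the circle \<open>\<zeta> I - A\<^sup>* = \<zeta> (I - \<zeta> A)\<^sup>*\<close>, because \<open>\<zeta> \<zeta>\<^sup>* = 1\<close>.\<close>

lemma minv_adjoint_resolvent_mat:
  assumes z: "cmod z = 1"
  shows "minv n (z \<cdot>\<^sub>m 1\<^sub>m n - mat_adjoint A) = mat_adjoint (z \<cdot>\<^sub>m resolvent_mat n A z)"
proof -
  note A = stable_mat_carrier
  note inv = resolvent_mat_inverse[of z]
  have z1: "cmod z \<le> 1" using z by simp
  have zc: "z * cnj z = 1" using complex_norm_square[of z] z by simp
  define M where "M = z \<cdot>\<^sub>m 1\<^sub>m n - mat_adjoint A"
  define B where "B = mat_adjoint (z \<cdot>\<^sub>m resolvent_mat n A z)"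
  have Mc: "M \<in> carrier_mat n n" unfolding M_def using carrier_mat_adjoint[OF A] by auto
  have Bc: "B \<in> carrier_mat n n" unfolding B_def by (rule carrier_mat_adjoint) (use inv(1) z1 in simp)
  have M_index: "M $$ (i,e) = (if i = e then z else 0) - cnj (A $$ (e,i))" if "i < n" "e < n" for i e
    unfolding M_def using that A carrier_mat_adjoint[OF A] by (simp add: index_mat_adjoint[OF A])
  have B_index: "B $$ (e,j) = cnj z * cnj (resolvent_mat n A z $$ (j,e))" if "e < n" "j < n" for e j
    unfolding B_def using that inv(1) z1 by (simp add: index_mat_adjoint[of _ n n])
  have IzA_index: "(1\<^sub>m n - z \<cdot>\<^sub>m A) $$ (i,e) = (if i = e then 1 else 0) - z * A $$ (i,e)"
    if "i < n" "e < n" for i e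
    using that A by simp
  have IzA: "1\<^sub>m n - z \<cdot>\<^sub>m A \<in> carrier_mat n n" using A by auto
  have "M * B = 1\<^sub>m n"
  proof (rule eq_matI)
    fix i j assume "i < dim_row (1\<^sub>m n)" "j < dim_col (1\<^sub>m n)"
    then have i: "i < n" and j: "j < n" by auto
    have "(M * B) $$ (i,j) = (\<Sum>e<n. M $$ (i,e) * B $$ (e,j))" by (rule index_mult_mat_sum[OF Mc Bc i j])
    also have "\<dots> = cnj (\<Sum>e<n. resolvent_mat n A z $$ (j,e) * (1\<^sub>m n - z \<cdot>\<^sub>m A) $$ (e,i))"
      unfolding cnj_sum
    proof (rule sum.cong[OF refl])
      fix e assume "e \<in> {..<n}" then have e: "e < n" by simp
      show "M $$ (i,e) * B $$ (e,j) = cnj (resolvent_mat n A z $$ (j,e) * (1\<^sub>m n - z \<cdot>\<^sub>m A) $$ (e,i))"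
        unfolding M_index[OF i e] B_index[OF e j] IzA_index[OF e i]
        using zc by (cases "i = e") (auto simp: algebra_simps)
    qed
    also have "\<dots> = cnj ((resolvent_mat n A z * (1\<^sub>m n - z \<cdot>\<^sub>m A)) $$ (j,i))"
      using inv(1)[OF z1] by (simp add: index_mult_mat_sum[OF _ IzA j i])
    also have "\<dots> = 1\<^sub>m n $$ (i,j)" using inv(3)[OF z1] i j by simp
    finally show "(M * B) $$ (i,j) = 1\<^sub>m n $$ (i,j)" .
  qed (use Mc Bc in auto)
  moreover have "B * M = 1\<^sub>m n"
  proof (rule eq_matI)
    fix i j assume "i < dim_row (1\<^sub>m n)" "j < dim_col (1\<^sub>m n)"
    then have i: "i < n" and j: "j < n" by auto
    have "(B * M) $$ (i,j) = (\<Sum>e<n. B $$ (i,e) * M $$ (e,j))" by (rule index_mult_mat_sum[OF Bc Mc i j])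
    also have "\<dots> = cnj (\<Sum>e<n. (1\<^sub>m n - z \<cdot>\<^sub>m A) $$ (j,e) * resolvent_mat n A z $$ (e,i))"
      unfolding cnj_sum
    proof (rule sum.cong[OF refl])
      fix e assume "e \<in> {..<n}" then have e: "e < n" by simp
      show "B $$ (i,e) * M $$ (e,j) = cnj ((1\<^sub>m n - z \<cdot>\<^sub>m A) $$ (j,e) * resolvent_mat n A z $$ (e,i))"
        unfolding M_index[OF e j] B_index[OF i e] IzA_index[OF j e]
        using zc by (cases "e = j") (auto simp: algebra_simps)
    qed
    also have "\<dots> = cnj (((1\<^sub>m n - z \<cdot>\<^sub>m A) * resolvent_mat n A z) $$ (j,i))"
      using inv(1)[OF z1] by (simp add: index_mult_mat_sum[OF IzA _ j i])
    also have "\<dots> = 1\<^sub>m n $$ (i,j)" using inv(2)[OF z1] i j by simp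
    finally show "(B * M) $$ (i,j) = 1\<^sub>m n $$ (i,j)" .
  qed (use Mc Bc in auto)
  ultimately show ?thesis using minv_eqI[OF Mc Bc] unfolding M_def B_def by blast
qed

end

section \<open>Square summable sequences and the adjoint Toeplitz operator\<close>

lemma vnorm2_nonneg: "0 \<le> vnorm2 v"
  unfolding vnorm2_def by (auto intro: sum_nonneg)

lemma cmod_add_power2_le: "(cmod (a + b))\<^sup>2 \<le> 2 * (cmod a)\<^sup>2 + 2 * (cmod b)\<^sup>2"
proof -
  have "(cmod (a + b))\<^sup>2 \<le> (cmod a + cmod b)\<^sup>2" by (simp add: power_mono norm_triangle_ineq)
  also have "\<dots> \<le> 2 * (cmod a)\<^sup>2 + 2 * (cmod b)\<^sup>2"
    using sum_squares_ge_zero[of "cmod a - cmod b" 0] by (simp add: power2_eq_square algebra_simps)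
  finally show ?thesis .
qed

lemma vnorm2_add_le:
  assumes "v \<in> carrier_vec k" "w \<in> carrier_vec k"
  shows "vnorm2 (v + w) \<le> 2 * vnorm2 v + 2 * vnorm2 w"
proof -
  have "vnorm2 (v + w) = (\<Sum>i<k. (cmod (vec_index v i + vec_index w i))\<^sup>2)"
    unfolding vnorm2_def using assms by (auto intro!: sum.cong)
  also have "\<dots> \<le> (\<Sum>i<k. 2 * (cmod (vec_index v i))\<^sup>2 + 2 * (cmod (vec_index w i))\<^sup>2)"
    by (rule sum_mono) (rule cmod_add_power2_le)
  also have "\<dots> = 2 * vnorm2 v + 2 * vnorm2 w"
    unfolding vnorm2_def using assms by (simp add: sum.distrib sum_distrib_left)
  finally show ?thesis .
qed

lemma vnorm2_smult: "vnorm2 (c \<cdot>\<^sub>v v) = (cmod c)\<^sup>2 * vnorm2 v"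
  unfolding vnorm2_def by (simp add: norm_mult power_mult_distrib sum_distrib_left)

lemma ell2_carrier: "ell2 k y \<Longrightarrow> y j \<in> carrier_vec k"
  unfolding ell2_def by auto

lemma ell2_index_bounded:
  assumes y: "ell2 k y" and a: "a < k"
  obtains B where "0 \<le> B" "\<And>j. cmod (vec_index (y j) a) \<le> B"
proof -
  have s: "summable (\<lambda>j. vnorm2 (y j))" using y unfolding ell2_def by auto
  have "cmod (vec_index (y j) a) \<le> sqrt (\<Sum>j. vnorm2 (y j))" for j
  proof -
    have "dim_vec (y j) = k" using ell2_carrier[OF y] by auto
    then have "(cmod (vec_index (y j) a))\<^sup>2 \<le> vnorm2 (y j)"
      unfolding vnorm2_def using a by (intro member_le_sum) auto
    also have "vnorm2 (y j) \<le> (\<Sum>j. vnorm2 (y j))"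
      using sum_le_suminf[OF s, of "{j}"] vnorm2_nonneg by auto
    finally show ?thesis by (simp add: real_le_rsqrt)
  qed
  then show ?thesis using that[of "sqrt (\<Sum>j. vnorm2 (y j))"] by (meson norm_ge_zero order_trans)
qed

lemma ell2_add: "ell2 k y1 \<Longrightarrow> ell2 k y2 \<Longrightarrow> ell2 k (\<lambda>j. y1 j + y2 j)"
proof -
  assume y1: "ell2 k y1" and y2: "ell2 k y2"
  have s1: "summable (\<lambda>j. vnorm2 (y1 j))" and s2: "summable (\<lambda>j. vnorm2 (y2 j))"
    using y1 y2 unfolding ell2_def by auto
  have "summable (\<lambda>j. vnorm2 (y1 j + y2 j))"
  proof (rule summable_comparison_test[OF _ summable_add[OF summable_mult[OF s1] summable_mult[OF s2]]])
    show "\<exists>N. \<forall>j\<ge>N. norm (vnorm2 (y1 j + y2 j)) \<le> 2 * vnorm2 (y1 j) + 2 * vnorm2 (y2 j)"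
      using vnorm2_add_le[OF ell2_carrier[OF y1] ell2_carrier[OF y2]] vnorm2_nonneg by auto
  qed
  then show ?thesis using y1 y2 ell2_carrier unfolding ell2_def by (auto simp del: vnorm2_def)
qed

lemma ell2_smult: "ell2 k y \<Longrightarrow> ell2 k (\<lambda>j. c \<cdot>\<^sub>v y j)"
  unfolding ell2_def vnorm2_smult by (auto intro: summable_mult)

lemma ell2_shift: "ell2 k y \<Longrightarrow> ell2 k (\<lambda>j. y (Suc j))"
  unfolding ell2_def using summable_Suc_iff[of "\<lambda>j. vnorm2 (y j)"] by auto

lemma ell2_zero: "ell2 k (\<lambda>j. 0\<^sub>v k)"
  unfolding ell2_def vnorm2_def by simp

lemma summable_power2_cmod:
  fixes h :: "nat \<Rightarrow> complex"
  assumes s: "summable (\<lambda>j. cmod (h j))"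
  shows "summable (\<lambda>j. (cmod (h j))\<^sup>2)"
proof (rule summable_comparison_test_ev[OF _ s])
  have "eventually (\<lambda>j. cmod (h j) < 1) sequentially"
    using summable_LIMSEQ_zero[OF s] by (rule order_tendstoD) simp
  then show "eventually (\<lambda>j. norm ((cmod (h j))\<^sup>2) \<le> cmod (h j)) sequentially"
    by eventually_elim (simp add: power2_eq_square mult_le_one mult_left_le)
qed

context
  fixes r m :: nat and \<Phi> :: "complex \<Rightarrow> complex mat"
  assumes RH: "RH_inf r m \<Phi>"
begin

lemma dim_T_op_adj: "dim_vec (T_op_adj r m \<Phi> y i) = m"
  unfolding T_op_adj_def toeplitz_def by simp

lemma index_adjoint_fourier_coeff_mult_vec:
  assumes v: "v \<in> carrier_vec r" and l: "l < m"
  shows "vec_index (mat_adjoint (fourier_coeff r m \<Phi> k) *\<^sub>v v) l =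
    (\<Sum>a<r. cnj (circle_coeff (\<lambda>z. \<Phi> z $$ (a,l)) k) * vec_index v a)"
proof -
  have "mat_adjoint (fourier_coeff r m \<Phi> k) \<in> carrier_mat m r"
    by (rule carrier_mat_adjoint[OF fourier_coeff_carrier])
  then show ?thesis using v l
    by (auto simp: scalar_prod_def lessThan_atLeast0 index_mat_adjoint[OF fourier_coeff_carrier]
        fourier_coeff_index intro!: sum.cong)
qed

lemma index_T_op_adj:
  assumes y: "\<And>j. y j \<in> carrier_vec r" and l: "l < m"
  shows "vec_index (T_op_adj r m \<Phi> y i) l =
    (\<Sum>j. \<Sum>a<r. cnj (circle_coeff (\<lambda>z. \<Phi> z $$ (a,l)) (int j - int i)) * vec_index (y j) a)"
  unfolding T_op_adj_def toeplitz_def using l by (simp add: index_adjoint_fourier_coeff_mult_vec[OF y l])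

lemma index_fourier_coeff_mult_vec:
  assumes "u \<in> carrier_vec m" "a < r"
  shows "vec_index (fourier_coeff r m \<Phi> k *\<^sub>v u) a = (\<Sum>b<m. circle_coeff (\<lambda>z. \<Phi> z $$ (a,b)) k * vec_index u b)"
  using fourier_coeff_carrier[of r m \<Phi> k] assms
  by (auto simp: scalar_prod_def lessThan_atLeast0 fourier_coeff_index intro!: sum.cong)

text \<open>The series defining \<open>T\<^sub>\<Phi>\<^sup>*\<close> converge absolutely: the coefficients of \<open>\<Phi>\<close> decay geometrically
  and square summable sequences are bounded.\<close>

lemma summable_T_op_adj_term:
  assumes y: "ell2 r y" and l: "l < m"
  shows "summable (\<lambda>j. \<Sum>a<r. cnj (circle_coeff (\<lambda>z. \<Phi> z $$ (a,l)) (int j - int i)) * vec_index (y j) a)"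
proof (rule summable_sum)
  fix a assume "a \<in> {..<r}"
  then have a: "a < r" by simp
  obtain K q where K: "0 \<le> K" "0 < q" "q < 1"
    "\<And>n. cmod (circle_coeff (\<lambda>z. \<Phi> z $$ (a,l)) (int n)) \<le> K * q ^ n"
    by (rule circle_coeff_geometric_decay[OF RH_inf_entry_holomorphic_near_cdisc[OF RH a l]]) blast
  obtain B where B: "0 \<le> B" "\<And>j. cmod (vec_index (y j) a) \<le> B" by (rule ell2_index_bounded[OF y a]) blast
  show "summable (\<lambda>j. cnj (circle_coeff (\<lambda>z. \<Phi> z $$ (a,l)) (int j - int i)) * vec_index (y j) a)"
  proof (rule summable_comparison_test_ev)
    show "eventually (\<lambda>j. norm (cnj (circle_coeff (\<lambda>z. \<Phi> z $$ (a,l)) (int j - int i)) * vec_index (y j) a)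
        \<le> K * B / q ^ i * q ^ j) sequentially"
      unfolding eventually_at_top_linorder
    proof (intro exI allI impI)
      fix j assume ij: "i \<le> j"
      then have diff: "int j - int i = int (j - i)" by simp
      have "norm (cnj (circle_coeff (\<lambda>z. \<Phi> z $$ (a,l)) (int j - int i)) * vec_index (y j) a)
          = cmod (circle_coeff (\<lambda>z. \<Phi> z $$ (a,l)) (int (j - i))) * cmod (vec_index (y j) a)"
        by (simp add: diff norm_mult)
      also have "\<dots> \<le> (K * q ^ (j - i)) * B"
        by (rule mult_mono[OF K(4) B(2)]) (use K in auto)
      also have "q ^ (j - i) = q ^ j / q ^ i" using ij K(2) by (simp add: power_diff)
      finally show "norm (cnj (circle_coeff (\<lambda>z. \<Phi> z $$ (a,l)) (int j - int i)) * vec_index (y j) a)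
          \<le> K * B / q ^ i * q ^ j"
        by (simp add: field_simps)
    qed
    show "summable (\<lambda>j. K * B / q ^ i * q ^ j)"
      by (rule summable_mult, rule summable_geometric) (use K in auto)
  qed
qed

lemma T_op_adj_add:
  assumes y1: "ell2 r y1" and y2: "ell2 r y2"
  shows "T_op_adj r m \<Phi> (\<lambda>j. y1 j + y2 j) i = T_op_adj r m \<Phi> y1 i + T_op_adj r m \<Phi> y2 i"
proof (rule eq_vecI)
  fix l assume "l < dim_vec (T_op_adj r m \<Phi> y1 i + T_op_adj r m \<Phi> y2 i)"
  then have l: "l < m" by (simp add: dim_T_op_adj)
  have c: "y1 j + y2 j \<in> carrier_vec r" for j using ell2_carrier[OF y1] ell2_carrier[OF y2] by auto
  have "vec_index (T_op_adj r m \<Phi> (\<lambda>j. y1 j + y2 j) i) l =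
     (\<Sum>j. (\<Sum>a<r. cnj (circle_coeff (\<lambda>z. \<Phi> z $$ (a,l)) (int j - int i)) * vec_index (y1 j) a) +
          (\<Sum>a<r. cnj (circle_coeff (\<lambda>z. \<Phi> z $$ (a,l)) (int j - int i)) * vec_index (y2 j) a))"
    unfolding index_T_op_adj[OF c l] sum.distrib[symmetric]
    by (intro arg_cong[where f=suminf] ext sum.cong refl)
      (simp add: carrier_vecD[OF ell2_carrier[OF y1]] carrier_vecD[OF ell2_carrier[OF y2]] algebra_simps)
  also have "\<dots> = vec_index (T_op_adj r m \<Phi> y1 i) l + vec_index (T_op_adj r m \<Phi> y2 i) l"
    unfolding index_T_op_adj[OF ell2_carrier[OF y1] l] index_T_op_adj[OF ell2_carrier[OF y2] l]
    by (rule suminf_add[symmetric, OF summable_T_op_adj_term[OF y1 l] summable_T_op_adj_term[OF y2 l]])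
  finally show "vec_index (T_op_adj r m \<Phi> (\<lambda>j. y1 j + y2 j) i) l = vec_index (T_op_adj r m \<Phi> y1 i + T_op_adj r m \<Phi> y2 i) l"
    using l by (simp add: dim_T_op_adj)
qed (simp add: dim_T_op_adj)

lemma T_op_adj_smult:
  assumes y: "ell2 r y"
  shows "T_op_adj r m \<Phi> (\<lambda>j. c \<cdot>\<^sub>v y j) i = c \<cdot>\<^sub>v T_op_adj r m \<Phi> y i"
proof (rule eq_vecI)
  fix l assume "l < dim_vec (c \<cdot>\<^sub>v T_op_adj r m \<Phi> y i)"
  then have l: "l < m" by (simp add: dim_T_op_adj)
  have cc: "c \<cdot>\<^sub>v y j \<in> carrier_vec r" for j using ell2_carrier[OF y] by auto
  have "vec_index (T_op_adj r m \<Phi> (\<lambda>j. c \<cdot>\<^sub>v y j) i) l =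
     (\<Sum>j. c * (\<Sum>a<r. cnj (circle_coeff (\<lambda>z. \<Phi> z $$ (a,l)) (int j - int i)) * vec_index (y j) a))"
    unfolding index_T_op_adj[OF cc l] sum_distrib_left
    by (intro arg_cong[where f=suminf] ext sum.cong refl) (simp add: carrier_vecD[OF ell2_carrier[OF y]] algebra_simps)
  also have "\<dots> = c * vec_index (T_op_adj r m \<Phi> y i) l"
    unfolding index_T_op_adj[OF ell2_carrier[OF y] l]
    by (rule suminf_mult[OF summable_T_op_adj_term[OF y l]])
  finally show "vec_index (T_op_adj r m \<Phi> (\<lambda>j. c \<cdot>\<^sub>v y j) i) l = vec_index (c \<cdot>\<^sub>v T_op_adj r m \<Phi> y i) l"
    using l by (simp add: dim_T_op_adj)
qed (simp add: dim_T_op_adj)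

text \<open>\<open>T\<^sub>\<Phi>\<^sup>*\<close> intertwines the backward shift: the dropped term carries the coefficient \<open>\<Phi>\<^sub>-\<^sub>1 = 0\<close>.\<close>

lemma T_op_adj_shift:
  assumes y: "ell2 r y"
  shows "T_op_adj r m \<Phi> y (Suc i) = T_op_adj r m \<Phi> (\<lambda>j. y (Suc j)) i"
proof (rule eq_vecI)
  fix l assume "l < dim_vec (T_op_adj r m \<Phi> (\<lambda>j. y (Suc j)) i)"
  then have l: "l < m" by (simp add: dim_T_op_adj)
  define f where "f j = (\<Sum>a<r. cnj (circle_coeff (\<lambda>z. \<Phi> z $$ (a,l)) (int j - int (Suc i))) * vec_index (y j) a)" for j
  have "f 0 = 0" unfolding f_def
    by (rule sum.neutral) (use circle_coeff_neg_eq_0[OF RH_inf_entry_holomorphic_near_cdisc[OF RH _ l]] in auto)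
  moreover have "summable f" unfolding f_def by (rule summable_T_op_adj_term[OF y l])
  ultimately have "(\<Sum>j. f (Suc j)) = suminf f" by (simp add: suminf_split_head)
  moreover have "vec_index (T_op_adj r m \<Phi> (\<lambda>j. y (Suc j)) i) l = (\<Sum>j. f (Suc j))"
    unfolding index_T_op_adj[OF ell2_carrier[OF ell2_shift[OF y]] l] f_def by simp
  moreover have "vec_index (T_op_adj r m \<Phi> y (Suc i)) l = suminf f"
    unfolding index_T_op_adj[OF ell2_carrier[OF y] l] f_def ..
  ultimately show "vec_index (T_op_adj r m \<Phi> y (Suc i)) l = vec_index (T_op_adj r m \<Phi> (\<lambda>j. y (Suc j)) i) l"
    by simp
qed (simp add: dim_T_op_adj)

lemma ell2_fourier_coeff_tail:
  assumes u: "u \<in> carrier_vec m"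
  shows "ell2 r (\<lambda>j. fourier_coeff r m \<Phi> (int j + int s) *\<^sub>v u)"
  unfolding ell2_def
proof (intro conjI allI)
  show "fourier_coeff r m \<Phi> (int j + int s) *\<^sub>v u \<in> carrier_vec r" for j
    by (rule mult_mat_vec_carrier[OF fourier_coeff_carrier u])
  have "summable (\<lambda>j. (cmod (vec_index (fourier_coeff r m \<Phi> (int j + int s) *\<^sub>v u) a))\<^sup>2)" if a: "a < r" for a
  proof (rule summable_power2_cmod)
    have decay: "summable (\<lambda>j. cmod (circle_coeff (\<lambda>z. \<Phi> z $$ (a,b)) (int j + int s)))" if b: "b < m" for b
    proof -
      obtain K q where K: "0 \<le> K" "0 < q" "q < 1"
        "\<And>n. cmod (circle_coeff (\<lambda>z. \<Phi> z $$ (a,b)) (int n)) \<le> K * q ^ n"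
        by (rule circle_coeff_geometric_decay[OF RH_inf_entry_holomorphic_near_cdisc[OF RH a b]]) blast
      have geometric: "summable (\<lambda>j. K * q ^ s * q ^ j)"
        by (rule summable_mult, rule summable_geometric) (use K in auto)
      have "cmod (circle_coeff (\<lambda>z. \<Phi> z $$ (a,b)) (int j + int s)) \<le> K * q ^ s * q ^ j" for j
        using K(4)[of "j + s"] by (simp add: power_add mult_ac)
      then show ?thesis by (intro summable_comparison_test'[OF geometric]) simp
    qed
    have majorant: "summable (\<lambda>j. \<Sum>b<m. cmod (circle_coeff (\<lambda>z. \<Phi> z $$ (a,b)) (int j + int s)) *
                                             cmod (vec_index u b))"
      by (intro summable_sum summable_mult2 decay) simp
    have "cmod (vec_index (fourier_coeff r m \<Phi> (int j + int s) *\<^sub>v u) a)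
        \<le> (\<Sum>b<m. cmod (circle_coeff (\<lambda>z. \<Phi> z $$ (a,b)) (int j + int s)) * cmod (vec_index u b))" for j
      unfolding index_fourier_coeff_mult_vec[OF u a]
      by (rule order_trans[OF norm_sum]) (simp add: norm_mult)
    then show "summable (\<lambda>j. cmod (vec_index (fourier_coeff r m \<Phi> (int j + int s) *\<^sub>v u) a))"
      by (intro summable_comparison_test'[OF majorant]) simp
  qed
  then have "summable (\<lambda>j. \<Sum>a<r. (cmod (vec_index (fourier_coeff r m \<Phi> (int j + int s) *\<^sub>v u) a))\<^sup>2)"
    by (intro summable_sum) auto
  moreover have "dim_vec (fourier_coeff r m \<Phi> (int j + int s) *\<^sub>v u) = r" for j
    using fourier_coeff_carrier[of r m \<Phi> "int j + int s"] by (simp add: carrier_matD)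
  ultimately show "summable (\<lambda>j. vnorm2 (fourier_coeff r m \<Phi> (int j + int s) *\<^sub>v u))"
    unfolding vnorm2_def by (simp only:)
qed

end

definition subspace_vec :: "nat \<Rightarrow> complex Matrix.vec set \<Rightarrow> bool" where
  "subspace_vec n X \<longleftrightarrow> X \<subseteq> carrier_vec n \<and> 0\<^sub>v n \<in> X \<and>
     (\<forall>x \<in> X. \<forall>y \<in> X. x + y \<in> X) \<and> (\<forall>c. \<forall>x \<in> X. c \<cdot>\<^sub>v x \<in> X)"

lemma subspace_vec_diff:
  assumes X: "subspace_vec n X" and x: "x \<in> X" and y: "y \<in> X"
  shows "x - y \<in> X"
proof -
  have "x \<in> carrier_vec n" "y \<in> carrier_vec n" using X x y unfolding subspace_vec_def by auto
  then have "x - y = x + (-1) \<cdot>\<^sub>v y" by (auto intro!: eq_vecI)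
  then show ?thesis using X x y unfolding subspace_vec_def by simp
qed

lemma orth_proj_subspace_vec:
  assumes X: "subspace_vec n X" and v: "v \<in> X"
  shows "orth_proj X v = v"
  unfolding orth_proj_def
proof (rule the_equality)
  have cv: "v \<in> carrier_vec n" using X v unfolding subspace_vec_def by auto
  show "v \<in> X \<and> (\<forall>w\<in>X. (v - v) \<bullet>c w = 0)"
  proof (intro conjI ballI)
    fix w assume "w \<in> X"
    then have "w \<in> carrier_vec n" using X unfolding subspace_vec_def by auto
    moreover have "v - v = 0\<^sub>v n" using cv by (auto intro!: eq_vecI)
    ultimately show "(v - v) \<bullet>c w = 0" by simp
  qed (rule v)
  fix p assume p: "p \<in> X \<and> (\<forall>w\<in>X. (v - p) \<bullet>c w = 0)"
  then have cp: "p \<in> carrier_vec n" using X unfolding subspace_vec_def by auto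
  have "(v - p) \<bullet>c (v - p) = 0" using p subspace_vec_diff[OF X v] by blast
  then have "v - p = 0\<^sub>v n" using conjugate_square_eq_0_vec[of "v - p" n] cv cp by simp
  then have "vec_index p i = vec_index v i" if "i < n" for i
    using cv cp that by (metis carrier_vecD index_minus_vec(1) index_zero_vec(1) right_minus_eq)
  then show "p = v" using cv cp by (intro eq_vecI) auto
qed

lemma finsum_vec_mem_subspace_vec:
  assumes X: "subspace_vec n X" and I: "finite I" and f: "\<And>i. i \<in> I \<Longrightarrow> f i \<in> X"
  shows "finsum_vec TYPE(complex) n f I \<in> X"
  using I f
proof (induction I rule: finite_induct)
  case empty
  then show ?case using X unfolding subspace_vec_def by (simp add: finsum_vec_empty)
next
  case (insert i I)
  have carrier: "f \<in> I \<rightarrow> carrier_vec n" "f i \<in> carrier_vec n"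
    using insert.prems X unfolding subspace_vec_def by auto
  have "finsum_vec TYPE(complex) n f (insert i I) = f i + finsum_vec TYPE(complex) n f I"
    by (rule finsum_vec_insert[OF insert.hyps carrier])
  then show ?case using insert X unfolding subspace_vec_def by simp
qed

lemma controllable_invariant_subspace_vec:
  assumes X: "subspace_vec n X" and A: "A \<in> carrier_mat n n" and Gam: "\<Gamma> \<in> carrier_mat n m"
    and A_inv: "\<And>x. x \<in> X \<Longrightarrow> A *\<^sub>v x \<in> X"
    and Gam_range: "\<And>u. u \<in> carrier_vec m \<Longrightarrow> \<Gamma> *\<^sub>v u \<in> X"
    and ctrl: "controllable n m A \<Gamma>"
  shows "X = carrier_vec n"
proof
  show "X \<subseteq> carrier_vec n" using X unfolding subspace_vec_def by auto
  have pow: "(A ^\<^sub>m \<nu> * \<Gamma>) *\<^sub>v u \<in> X" if u: "u \<in> carrier_vec m" for u \<nu>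
  proof -
    have "((\<lambda>v. A *\<^sub>v v) ^^ \<nu>) (\<Gamma> *\<^sub>v u) \<in> X"
      by (induction \<nu>) (simp_all add: Gam_range[OF u] A_inv)
    moreover have "(A ^\<^sub>m \<nu> * \<Gamma>) *\<^sub>v u = ((\<lambda>v. A *\<^sub>v v) ^^ \<nu>) (\<Gamma> *\<^sub>v u)"
      using A Gam u by (simp add: assoc_mult_mat_vec[of _ n n _ m] funpow_mult_mat_vec)
    ultimately show ?thesis by simp
  qed
  show "carrier_vec n \<subseteq> X"
  proof
    fix x :: "complex Matrix.vec" assume "x \<in> carrier_vec n"
    then obtain N u where "\<forall>\<nu><N. u \<nu> \<in> carrier_vec m"
      and "x = finsum_vec TYPE(complex) n (\<lambda>\<nu>. (A ^\<^sub>m \<nu> * \<Gamma>) *\<^sub>v u \<nu>) {..<N}"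
      using ctrl unfolding controllable_def by blast
    then show "x \<in> X" by (auto intro: finsum_vec_mem_subspace_vec[OF X] pow)
  qed
qed

lemma obs_op_invariant_compression:
  assumes inv: "\<And>x. x \<in> X \<Longrightarrow> a x \<in> X" and proj: "\<And>x. x \<in> X \<Longrightarrow> p x = x" and x: "x \<in> X"
  shows "obs_op c (\<lambda>v. p (a v)) x = obs_op c a x"
proof -
  have "((\<lambda>v. p (a v)) ^^ j) x = (a ^^ j) x \<and> (a ^^ j) x \<in> X" for j
    by (induction j) (simp_all add: x inv proj)
  then show ?thesis unfolding obs_op_def by simp
qed

section \<open>The subspace \<open>\<X>\<^sub>\<Phi>\<close>\<close>

context
  fixes n r m :: nat and A C :: "complex mat" and \<Phi> :: "complex \<Rightarrow> complex mat"
  assumes A: "A \<in> carrier_mat n n" and C: "C \<in> carrier_mat m n" and RH: "RH_inf r m \<Phi>"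
begin

lemma W_obs_eq: "x \<in> carrier_vec n \<Longrightarrow> W_obs C A x j = C *\<^sub>v ((A ^\<^sub>m j) *\<^sub>v x)"
  unfolding W_obs_def obs_op_def by (simp add: funpow_mult_mat_vec[OF A])

lemma W_obs_add:
  assumes "x1 \<in> carrier_vec n" "x2 \<in> carrier_vec n"
  shows "W_obs C A (x1 + x2) j = W_obs C A x1 j + W_obs C A x2 j"
proof -
  have "A ^\<^sub>m j \<in> carrier_mat n n" using A by simp
  then show ?thesis using assms C
    by (simp add: W_obs_eq mult_add_distrib_mat_vec[of _ n n] mult_add_distrib_mat_vec[OF C])
qed

lemma W_obs_smult:
  assumes "x \<in> carrier_vec n"
  shows "W_obs C A (c \<cdot>\<^sub>v x) j = c \<cdot>\<^sub>v W_obs C A x j"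
proof -
  have "A ^\<^sub>m j \<in> carrier_mat n n" using A by simp
  then show ?thesis using assms C by (simp add: W_obs_eq mult_mat_vec[of _ n n] mult_mat_vec[OF C])
qed

lemma X_Phi_subspace_vec: "subspace_vec n (X_Phi n r m C A \<Phi>)"
  unfolding subspace_vec_def
proof (intro conjI ballI allI)
  show "X_Phi n r m C A \<Phi> \<subseteq> carrier_vec n" unfolding X_Phi_def by auto
  have "W_obs C A (0\<^sub>v n) = T_op_adj r m \<Phi> (\<lambda>j. 0 \<cdot>\<^sub>v 0\<^sub>v r)"
  proof
    fix j
    have "T_op_adj r m \<Phi> (\<lambda>j. 0 \<cdot>\<^sub>v 0\<^sub>v r) j = 0 \<cdot>\<^sub>v T_op_adj r m \<Phi> (\<lambda>j. 0\<^sub>v r) j"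
      by (rule T_op_adj_smult[OF RH ell2_zero])
    also have "\<dots> = 0\<^sub>v m" by (auto simp: dim_T_op_adj[OF RH])
    also have "\<dots> = W_obs C A (0\<^sub>v n) j"
      using A C by (simp add: W_obs_eq mult_mat_vec_zero[of _ n n] mult_mat_vec_zero[of _ m n])
    finally show "W_obs C A (0\<^sub>v n) j = T_op_adj r m \<Phi> (\<lambda>j. 0 \<cdot>\<^sub>v 0\<^sub>v r) j" ..
  qed
  then show "0\<^sub>v n \<in> X_Phi n r m C A \<Phi>"
    unfolding X_Phi_def using ell2_smult[OF ell2_zero, of r 0] by (intro CollectI conjI exI) simp_all
next
  fix x1 x2 assume "x1 \<in> X_Phi n r m C A \<Phi>" "x2 \<in> X_Phi n r m C A \<Phi>"
  then obtain y1 y2 where x1: "x1 \<in> carrier_vec n" "ell2 r y1" "W_obs C A x1 = T_op_adj r m \<Phi> y1"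
    and x2: "x2 \<in> carrier_vec n" "ell2 r y2" "W_obs C A x2 = T_op_adj r m \<Phi> y2"
    unfolding X_Phi_def by auto
  have "W_obs C A (x1 + x2) j = T_op_adj r m \<Phi> (\<lambda>j. y1 j + y2 j) j" for j
    unfolding W_obs_add[OF x1(1) x2(1)] T_op_adj_add[OF RH x1(2) x2(2)] x1(3) x2(3) ..
  then show "x1 + x2 \<in> X_Phi n r m C A \<Phi>"
    unfolding X_Phi_def using x1 x2 ell2_add[OF x1(2) x2(2)] by (auto intro!: exI[of _ "\<lambda>j. y1 j + y2 j"])
next
  fix c x assume "x \<in> X_Phi n r m C A \<Phi>"
  then obtain y where x: "x \<in> carrier_vec n" "ell2 r y" "W_obs C A x = T_op_adj r m \<Phi> y"
    unfolding X_Phi_def by auto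
  have "W_obs C A (c \<cdot>\<^sub>v x) j = T_op_adj r m \<Phi> (\<lambda>j. c \<cdot>\<^sub>v y j) j" for j
    unfolding W_obs_smult[OF x(1)] T_op_adj_smult[OF RH x(2)] x(3) ..
  then show "c \<cdot>\<^sub>v x \<in> X_Phi n r m C A \<Phi>"
    unfolding X_Phi_def using x ell2_smult[OF x(2)] by (auto intro!: exI[of _ "\<lambda>j. c \<cdot>\<^sub>v y j"])
qed

lemma X_Phi_A_invariant:
  assumes "x \<in> X_Phi n r m C A \<Phi>"
  shows "A *\<^sub>v x \<in> X_Phi n r m C A \<Phi>"
proof -
  obtain y where x: "x \<in> carrier_vec n" "ell2 r y" "W_obs C A x = T_op_adj r m \<Phi> y"
    using assms unfolding X_Phi_def by auto
  have "W_obs C A (A *\<^sub>v x) j = W_obs C A x (Suc j)" for j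
    unfolding W_obs_def obs_op_def by (simp add: funpow_Suc_right del: funpow.simps)
  then have "W_obs C A (A *\<^sub>v x) j = T_op_adj r m \<Phi> (\<lambda>j. y (Suc j)) j" for j
    unfolding x(3) T_op_adj_shift[OF RH x(2)] .
  then show ?thesis
    unfolding X_Phi_def using x A ell2_shift[OF x(2)] by (auto intro!: exI[of _ "\<lambda>j. y (Suc j)"])
qed

end

section \<open>Markov parameters of a spectral density and its spectral factor\<close>

context
  fixes n m r :: nat
    and A C \<Gamma> R\<^sub>0 :: "complex mat"
    and R \<Phi> :: "complex \<Rightarrow> complex mat"
  assumes st: "stable_mat n A"
    and C: "C \<in> carrier_mat m n"
    and Gam: "\<Gamma> \<in> carrier_mat n m"
    and R0: "R\<^sub>0 \<in> carrier_mat m m"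
    and R_real: "\<forall>\<zeta>. cmod \<zeta> = 1 \<longrightarrow>
        R \<zeta> = \<zeta> \<cdot>\<^sub>m (C * minv n (1\<^sub>m n - \<zeta> \<cdot>\<^sub>m A) * \<Gamma>) + R\<^sub>0
              + mat_adjoint \<Gamma> * minv n (\<zeta> \<cdot>\<^sub>m 1\<^sub>m n - mat_adjoint A) * mat_adjoint C"
    and Phi: "outer_spectral_factor r m R \<Phi>"
begin

lemma R_index_realization:
  assumes z: "cmod z = 1" and l: "l < m" and b: "b < m"
  shows "R z $$ (l,b) = z * (C * resolvent_mat n A z * \<Gamma>) $$ (l,b) + R\<^sub>0 $$ (l,b)
                        + cnj (z * (C * resolvent_mat n A z * \<Gamma>) $$ (b,l))"
proof -
  define M where "M = resolvent_mat n A z"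
  have Mc: "M \<in> carrier_mat n n" unfolding M_def by (rule resolvent_mat_inverse(1)[OF st]) (use z in simp)
  have zM: "z \<cdot>\<^sub>m M \<in> carrier_mat n n" using Mc by simp
  have E: "C * M * \<Gamma> \<in> carrier_mat m m" using C Mc Gam by simp
  have R: "R z = z \<cdot>\<^sub>m (C * M * \<Gamma>) + R\<^sub>0 + mat_adjoint \<Gamma> * mat_adjoint (z \<cdot>\<^sub>m M) * mat_adjoint C"
    using R_real z minv_adjoint_resolvent_mat[OF st z] unfolding M_def resolvent_mat_def by simp
  have pull_scalar: "C * (z \<cdot>\<^sub>m M) * \<Gamma> = z \<cdot>\<^sub>m (C * M * \<Gamma>)"
    using mult_smult_distrib[OF C Mc, of z] mult_smult_assoc_mat[of "C * M" m n \<Gamma> m z] C Mc Gam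
    by simp
  have index_smult: "(z \<cdot>\<^sub>m X) $$ (i,j) = z * X $$ (i,j)" if "X \<in> carrier_mat m m" "i < m" "j < m"
    for X :: "complex mat" and i j
    using that by (simp add: carrier_matD)
  have adj: "(mat_adjoint \<Gamma> * mat_adjoint (z \<cdot>\<^sub>m M) * mat_adjoint C) $$ (l,b) = cnj (z * (C * M * \<Gamma>) $$ (b,l))"
    using index_adjoint_triple_mult[OF C zM Gam l b] index_smult[OF E b l] pull_scalar by simp
  have index_add3: "(X + Y + Z) $$ (l,b) = X $$ (l,b) + Y $$ (l,b) + Z $$ (l,b)"
    if "X \<in> carrier_mat m m" "Y \<in> carrier_mat m m" "Z \<in> carrier_mat m m" for X Y Z :: "complex mat"
    using that l b by (simp add: carrier_matD)
  have "mat_adjoint \<Gamma> * mat_adjoint (z \<cdot>\<^sub>m M) * mat_adjoint C \<in> carrier_mat m m"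
    using carrier_mat_adjoint[OF Gam] carrier_mat_adjoint[OF zM] carrier_mat_adjoint[OF C] by simp
  from index_add3[OF _ R0 this] E
  have "R z $$ (l,b) = (z \<cdot>\<^sub>m (C * M * \<Gamma>)) $$ (l,b) + R\<^sub>0 $$ (l,b) + cnj (z * (C * M * \<Gamma>) $$ (b,l))"
    unfolding R adj by simp
  then show ?thesis using index_smult[OF E l b] unfolding M_def by simp
qed

lemma spectral_factor_carrier: "\<Phi> z \<in> carrier_mat r m"
  using Phi unfolding outer_spectral_factor_def RH_inf_def by auto

lemma holomorphic_near_cdisc_spectral_factor:
  "a < r \<Longrightarrow> b < m \<Longrightarrow> holomorphic_near_cdisc (\<lambda>z. \<Phi> z $$ (a,b))"
  using Phi unfolding outer_spectral_factor_def by (blast intro: RH_inf_entry_holomorphic_near_cdisc)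

lemma R_index_spectral_factor:
  assumes z: "cmod z = 1" and l: "l < m" and b: "b < m"
  shows "R z $$ (l,b) = (\<Sum>a<r. cnj (\<Phi> z $$ (a,l)) * \<Phi> z $$ (a,b))"
proof -
  have "1 / cnj z = z" using z complex_norm_square[of z] by (simp add: divide_simps mult.commute)
  then have "R z = mat_adjoint (\<Phi> z) * \<Phi> z" using Phi z unfolding outer_spectral_factor_def by auto
  then show ?thesis
    using index_mult_mat_sum[OF carrier_mat_adjoint[OF spectral_factor_carrier] spectral_factor_carrier l b]
      index_mat_adjoint[OF spectral_factor_carrier] l
    by simp
qed

text \<open>Only the first term of \<open>R\<close> contributes to positive frequencies: the last is the conjugate of a
  function holomorphic near the disc, so its positive coefficients are conjugated negative ones.\<close>

lemma circle_coeff_R_Suc: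
  assumes l: "l < m" and b: "b < m"
  shows "circle_coeff (\<lambda>z. R z $$ (l,b)) (int k + 1) = (C * A ^\<^sub>m k * \<Gamma>) $$ (l,b)"
proof -
  define E where "E a c z = z * (C * resolvent_mat n A z * \<Gamma>) $$ (a,c)" for a c z
  have hE: "holomorphic_near_cdisc (E a c)" if "a < m" "c < m" for a c
    unfolding E_def using that
    by (intro holomorphic_near_cdisc_mult holomorphic_near_cdisc_ident
        holomorphic_near_cdisc_triple_resolvent_mat[OF st C Gam])
  note cont = holomorphic_near_cdisc_continuous_on[OF hE]
  have "circle_coeff (\<lambda>z. R z $$ (l,b)) (int k + 1) =
        circle_coeff (\<lambda>z. (E l b z + R\<^sub>0 $$ (l,b)) + cnj (E b l z)) (int k + 1)"
    by (rule circle_coeff_cong) (simp add: R_index_realization l b E_def)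
  also have "\<dots> = circle_coeff (E l b) (int k + 1) + circle_coeff (\<lambda>z. R\<^sub>0 $$ (l,b)) (int k + 1)
      + circle_coeff (\<lambda>z. cnj (E b l z)) (int k + 1)"
    using cont[OF l b] cont[OF b l]
    by (simp add: circle_coeff_add continuous_intros del: circle_coeff_const)
  also have "\<dots> = circle_coeff (E l b) (int k + 1)"
    using circle_coeff_neg_eq_0[OF hE[OF b l], of "- (int k + 1)"]
    by (simp add: circle_coeff_cnj[of "E b l"] circle_coeff_const)
  also have "\<dots> = (C * A ^\<^sub>m k * \<Gamma>) $$ (l,b)"
    unfolding E_def circle_coeff_mult_ident by (rule circle_coeff_triple_resolvent_mat[OF st C Gam l b])
  finally show ?thesis .
qed

lemma markov_parameter_sums:
  assumes l: "l < m" and b: "b < m"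
  shows "(\<lambda>i. \<Sum>a<r. cnj (circle_coeff (\<lambda>z. \<Phi> z $$ (a,l)) (int i)) *
                    circle_coeff (\<lambda>z. \<Phi> z $$ (a,b)) (int i + int (Suc k)))
          sums (C * A ^\<^sub>m k * \<Gamma>) $$ (l,b)"
proof -
  note h = holomorphic_near_cdisc_spectral_factor
  have "(C * A ^\<^sub>m k * \<Gamma>) $$ (l,b) = circle_coeff (\<lambda>z. R z $$ (l,b)) (int (Suc k))"
    using circle_coeff_R_Suc[OF l b, of k] by (simp add: add.commute)
  also have "\<dots> = circle_coeff (\<lambda>z. \<Sum>a<r. cnj (\<Phi> z $$ (a,l)) * \<Phi> z $$ (a,b)) (int (Suc k))"
    by (rule circle_coeff_cong) (simp add: R_index_spectral_factor l b)
  also have "\<dots> = (\<Sum>a<r. circle_coeff (\<lambda>z. cnj (\<Phi> z $$ (a,l)) * \<Phi> z $$ (a,b)) (int (Suc k)))"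
    using holomorphic_near_cdisc_continuous_on[OF h] l b by (intro circle_coeff_sum) (auto intro!: continuous_intros)
  finally show ?thesis
    using circle_coeff_cnj_mult_sums[OF h h, where p = "Suc k"] l b by (simp only:) (intro sums_sum; simp)
qed

lemma RH_inf_spectral_factor: "RH_inf r m \<Phi>"
  using Phi unfolding outer_spectral_factor_def by auto

text \<open>Entrywise the Markov parameter identity; the terms with \<open>j < k\<close> vanish because \<open>\<Phi>\<^sub>j\<^sub>-\<^sub>k = 0\<close>.\<close>

lemma T_op_adj_shifted_spectral_factor:
  assumes u: "u \<in> carrier_vec m"
  shows "T_op_adj r m \<Phi> (\<lambda>j. fourier_coeff r m \<Phi> (int j + 1) *\<^sub>v u) k = (C * A ^\<^sub>m k * \<Gamma>) *\<^sub>v u"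
proof (rule eq_vecI)
  note RH = RH_inf_spectral_factor
  define y where "y j = fourier_coeff r m \<Phi> (int j + 1) *\<^sub>v u" for j
  have y: "ell2 r y" unfolding y_def using ell2_fourier_coeff_tail[OF RH u, of 1] by simp
  define M where "M = C * A ^\<^sub>m k * \<Gamma>"
  have "A ^\<^sub>m k \<in> carrier_mat n n" using stable_mat_carrier[OF st] by simp
  then have Mc: "M \<in> carrier_mat m m" unfolding M_def using C Gam by simp
  show "dim_vec (T_op_adj r m \<Phi> y k) = dim_vec (M *\<^sub>v u)"
    using Mc by (simp add: dim_T_op_adj[OF RH])
  fix l assume "l < dim_vec (M *\<^sub>v u)"
  then have l: "l < m" using Mc by simp
  define f where "f j = (\<Sum>a<r. cnj (circle_coeff (\<lambda>z. \<Phi> z $$ (a,l)) (int j - int k)) *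
       (\<Sum>b<m. circle_coeff (\<lambda>z. \<Phi> z $$ (a,b)) (int j + 1) * vec_index u b))" for j
  have T: "vec_index (T_op_adj r m \<Phi> y k) l = suminf f"
    unfolding index_T_op_adj[OF RH ell2_carrier[OF y] l] f_def y_def
    by (intro arg_cong[where f=suminf] ext sum.cong refl) (simp add: index_fourier_coeff_mult_vec[OF RH u])
  have shift: "f (i + k) = (\<Sum>b<m. vec_index u b * (\<Sum>a<r. cnj (circle_coeff (\<lambda>z. \<Phi> z $$ (a,l)) (int i)) *
        circle_coeff (\<lambda>z. \<Phi> z $$ (a,b)) (int i + int (Suc k))))" for i
  proof -
    have e: "int (i + k) - int k = int i" "int (i + k) + 1 = int i + int (Suc k)" by simp_all
    show ?thesis unfolding f_def e
      by (simp add: sum_distrib_left sum_distrib_right mult_ac sum.swap[of _ "{..<r}"])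
  qed
  have tail_sums: "(\<lambda>i. \<Sum>b<m. vec_index u b * (\<Sum>a<r. cnj (circle_coeff (\<lambda>z. \<Phi> z $$ (a,l)) (int i)) *
        circle_coeff (\<lambda>z. \<Phi> z $$ (a,b)) (int i + int (Suc k))))
      sums (\<Sum>b<m. vec_index u b * M $$ (l,b))"
    unfolding M_def by (intro sums_sum sums_mult markov_parameter_sums l) simp
  have head: "(\<Sum>i<k. f i) = 0"
    unfolding f_def
    by (intro sum.neutral ballI)
      (simp add: circle_coeff_neg_eq_0[OF RH_inf_entry_holomorphic_near_cdisc[OF RH _ l]])
  have "f sums (\<Sum>b<m. vec_index u b * M $$ (l,b))"
    using tail_sums unfolding shift[symmetric] sums_iff_shift head by simp
  then show "vec_index (T_op_adj r m \<Phi> y k) l = vec_index (M *\<^sub>v u) l"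
    unfolding T index_mult_mat_vec_sum[OF Mc u l] by (simp add: sums_unique[symmetric] mult.commute)
qed

lemma Gamma_mult_vec_in_X_Phi:
  assumes u: "u \<in> carrier_vec m"
  shows "\<Gamma> *\<^sub>v u \<in> X_Phi n r m C A \<Phi>"
proof -
  have A: "A \<in> carrier_mat n n" by (rule stable_mat_carrier[OF st])
  have Gu: "\<Gamma> *\<^sub>v u \<in> carrier_vec n" by (rule mult_mat_vec_carrier[OF Gam u])
  have "W_obs C A (\<Gamma> *\<^sub>v u) k = (C * A ^\<^sub>m k * \<Gamma>) *\<^sub>v u" for k
  proof -
    have "A ^\<^sub>m k \<in> carrier_mat n n" using A by simp
    then show ?thesis unfolding W_obs_eq[OF A C RH_inf_spectral_factor Gu]
      using C Gam u by (simp add: assoc_mult_mat_vec[of _ n n _ m] assoc_mult_mat_vec[of _ m n _ m])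
  qed
  then have "W_obs C A (\<Gamma> *\<^sub>v u) = T_op_adj r m \<Phi> (\<lambda>j. fourier_coeff r m \<Phi> (int j + 1) *\<^sub>v u)"
    by (simp add: T_op_adj_shifted_spectral_factor[OF u] fun_eq_iff)
  moreover have "ell2 r (\<lambda>j. fourier_coeff r m \<Phi> (int j + 1) *\<^sub>v u)"
    using ell2_fourier_coeff_tail[OF RH_inf_spectral_factor u, of 1] by simp
  ultimately show ?thesis unfolding X_Phi_def using Gu by auto
qed

end

theorem corollary2p2:
  fixes n m r :: nat
    and A C \<Gamma> R\<^sub>0 C\<^sub>\<Phi> :: "complex mat"
    and R \<Phi> :: "complex \<Rightarrow> complex mat"
  assumes A: "stable_mat n A"
    and C: "C \<in> carrier_mat m n"
    and Gam: "\<Gamma> \<in> carrier_mat n m"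
    and R0: "R\<^sub>0 \<in> carrier_mat m m"
    and R_real: "\<forall>\<zeta>. cmod \<zeta> = 1 \<longrightarrow>
        R \<zeta> = \<zeta> \<cdot>\<^sub>m (C * minv n (1\<^sub>m n - \<zeta> \<cdot>\<^sub>m A) * \<Gamma>) + R\<^sub>0
              + mat_adjoint \<Gamma> * minv n (\<zeta> \<cdot>\<^sub>m 1\<^sub>m n - mat_adjoint A) * mat_adjoint C"
    and R_nonzero: "\<exists>\<zeta>. cmod \<zeta> = 1 \<and> R \<zeta> \<noteq> 0\<^sub>m m m"
    and R_pos: "\<forall>\<zeta>. cmod \<zeta> = 1 \<longrightarrow> psd_mat m (R \<zeta>)"
    and Phi: "outer_spectral_factor r m R \<Phi>"
    and CPhi: "C\<^sub>\<Phi> \<in> carrier_mat r n"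
    and Phi_real: "\<forall>z. cmod z \<le> 1 \<longrightarrow>
        \<Phi> z = \<Phi> 0 + z \<cdot>\<^sub>m (C\<^sub>\<Phi> * minv n (1\<^sub>m n - z \<cdot>\<^sub>m A) * \<Gamma>)"
    and CPhi_obs: "\<forall>x \<in> X_Phi n r m C A \<Phi>.
        W_obs C A x = T_op_adj r m \<Phi> (W_obs C\<^sub>\<Phi> A x)"
  shows
    "(observable n C A \<longrightarrow>
        inj_on (W_obs C\<^sub>\<Phi> A) (X_Phi n r m C A \<Phi>) \<and>
        (\<forall>x \<in> X_Phi n r m C A \<Phi>.
           W_obs C\<^sub>\<Phi> A x = obs_op (\<lambda>v. C\<^sub>\<Phi> *\<^sub>v v) (\<lambda>v. orth_proj (X_Phi n r m C A \<Phi>) (A *\<^sub>v v)) x) \<and>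
        inj_on (obs_op (\<lambda>v. C\<^sub>\<Phi> *\<^sub>v v) (\<lambda>v. orth_proj (X_Phi n r m C A \<Phi>) (A *\<^sub>v v)))
               (X_Phi n r m C A \<Phi>))
     \<and> (controllable n m A \<Gamma> \<longrightarrow> X_Phi n r m C A \<Phi> = carrier_vec n)
     \<and> (observable n C A \<and> controllable n m A \<Gamma> \<longrightarrow> minimal_realization n m C\<^sub>\<Phi> A \<Gamma>)"
proof -
  have Ac: "A \<in> carrier_mat n n" by (rule stable_mat_carrier[OF A])
  have RH: "RH_inf r m \<Phi>" using Phi unfolding outer_spectral_factor_def by auto
  define X where "X = X_Phi n r m C A \<Phi>"
  have X: "subspace_vec n X" unfolding X_def by (rule X_Phi_subspace_vec[OF Ac C RH])
  have A_inv: "\<And>x. x \<in> X \<Longrightarrow> A *\<^sub>v x \<in> X" unfolding X_def by (rule X_Phi_A_invariant[OF Ac C RH])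
  have compression: "\<forall>x \<in> X. W_obs C\<^sub>\<Phi> A x = obs_op (\<lambda>v. C\<^sub>\<Phi> *\<^sub>v v) (\<lambda>v. orth_proj X (A *\<^sub>v v)) x"
    unfolding W_obs_def
    by (intro ballI obs_op_invariant_compression[symmetric, OF A_inv orth_proj_subspace_vec[OF X]])
  have injective: "inj_on (W_obs C\<^sub>\<Phi> A) X" if "observable n C A"
  proof (rule inj_onI)
    fix x1 x2 assume "x1 \<in> X" "x2 \<in> X" "W_obs C\<^sub>\<Phi> A x1 = W_obs C\<^sub>\<Phi> A x2"
    moreover have "X \<subseteq> carrier_vec n" using X unfolding subspace_vec_def by simp
    ultimately show "x1 = x2"
      using CPhi_obs \<open>observable n C A\<close> unfolding X_def observable_def by (metis inj_onD subsetD)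
  qed
  have full: "X = carrier_vec n" if "controllable n m A \<Gamma>"
    using controllable_invariant_subspace_vec[OF X Ac Gam A_inv _ that]
      Gamma_mult_vec_in_X_Phi[OF A C Gam R0 R_real Phi] unfolding X_def by blast
  show ?thesis
    using injective compression inj_on_cong[of X "W_obs C\<^sub>\<Phi> A"] full
    unfolding X_def[symmetric] minimal_realization_def observable_def by auto
qed

end
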